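(* In the setting of the context, the subalgebra of invariants $M_1^B=\{x\in M_1: b\triangleright x=\varepsilon(b)x \text{ for all } b\in B\}$ equals $M$.
   Context: $k$ is a field; $C_R(S)=\{r\in R:rs=sr\ \forall s\in S\}$. $N\subseteq M$ is a strongly separable, irreducible extension of $k$-algebras: $C_M(N)=k1$ and there are an $N$-bimodule map $E:M\to N$ and $x_1,\dots,x_n,y_1,\dots,y_n\in M$ with $\sum_iE(mx_i)y_i=m=\sum_ix_iE(y_im)$ for all $m\in M$, $E(1)\neq0$, $\sum_ix_iy_i\neq0$; normalized so that $E(1)=1$, whence $\sum_ix_iy_i=\lambda^{-1}1$ with $0\neq\lambda\in k$. Basic construction: given $S\subseteq R$, an $S$-bimodule map $E_S:R\to S$ with $E_S(1)=1$ and $r_i,s_i\in R$ with $\sum_iE_S(rr_i)s_i=r=\sum_ir_iE_S(s_ir)$ and $\sum_ir_is_i=\lambda^{-1}1$, set $R_1=R\otimes_SR$ with product $(a\otimes b)(c\otimes d)=aE_S(bc)\otimes d$, unit $\sum_ir_i\otimes s_i$, $R\subseteq R_1$ via $r\mapsto\sum_irr_i\otimes s_i$, Jones idempotent $e=1\otimes1$, $E_R:R_1\to R$, $a\otimes b\mapsto\lambda ab$; then $E_R$, $\lambda^{-1}r_i\otimes1$, $1\otimes s_i$ satisfy the same conditions with the same $\lambda$. From $(N\subseteq M,E)$ get $M_1,e_1,E_M$; from $(M\subseteq M_1,E_M)$ get $M_2,e_2,E_{M_1}$. Let $A=C_{M_1}(N)$, $B=C_{M_2}(M)$, $C=C_{M_2}(N)$.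 Depth 2 is assumed: $M_1$ is free as right $M$-module with basis in $A$, $M_2$ free as right $M_1$-module with basis in $B$. Let $F=E_M\circ E_{M_1}$, with values on $C$ in $k1\cong k$. The counit of $B$ is $\varepsilon(b)=\lambda^{-2}F(e_2e_1b)$, and $B$ acts on $M_1$ by $b\triangleright x=\lambda^{-1}E_{M_1}(bxe_2)$. *)

theory Defs
  imports "HOL-Algebra.Ring" "HOL-Algebra.Module"
begin

definition kalg :: "('k::field, 'a) module \<Rightarrow> bool" where
  "kalg R \<longleftrightarrow> ring R \<and>
     (\<forall>c a. a \<in> carrier R \<longrightarrow> c \<odot>\<^bsub>R\<^esub> a \<in> carrier R) \<and>
     (\<forall>c a b. a \<in> carrier R \<longrightarrow> b \<in> carrier R \<longrightarrow>
          c \<odot>\<^bsub>R\<^esub> (a \<oplus>\<^bsub>R\<^esub> b) = c \<odot>\<^bsub>R\<^esub> a \<oplus>\<^bsub>R\<^esub> c \<odot>\<^bsub>R\<^esub> b) \<and>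
     (\<forall>c d a. a \<in> carrier R \<longrightarrow> (c + d) \<odot>\<^bsub>R\<^esub> a = c \<odot>\<^bsub>R\<^esub> a \<oplus>\<^bsub>R\<^esub> d \<odot>\<^bsub>R\<^esub> a) \<and>
     (\<forall>c d a. a \<in> carrier R \<longrightarrow> (c * d) \<odot>\<^bsub>R\<^esub> a = c \<odot>\<^bsub>R\<^esub> (d \<odot>\<^bsub>R\<^esub> a)) \<and>
     (\<forall>a. a \<in> carrier R \<longrightarrow> 1 \<odot>\<^bsub>R\<^esub> a = a) \<and>
     (\<forall>c a b. a \<in> carrier R \<longrightarrow> b \<in> carrier R \<longrightarrow>
          (c \<odot>\<^bsub>R\<^esub> a) \<otimes>\<^bsub>R\<^esub> b = c \<odot>\<^bsub>R\<^esub> (a \<otimes>\<^bsub>R\<^esub> b) \<and>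
          a \<otimes>\<^bsub>R\<^esub> (c \<odot>\<^bsub>R\<^esub> b) = c \<odot>\<^bsub>R\<^esub> (a \<otimes>\<^bsub>R\<^esub> b))"

definition subalg :: "('k::field, 'a) module \<Rightarrow> 'a set \<Rightarrow> bool" where
  "subalg R S \<longleftrightarrow> S \<subseteq> carrier R \<and> \<one>\<^bsub>R\<^esub> \<in> S \<and>
     (\<forall>a\<in>S. \<forall>b\<in>S. a \<oplus>\<^bsub>R\<^esub> b \<in> S \<and> a \<otimes>\<^bsub>R\<^esub> b \<in> S) \<and>
     (\<forall>c. \<forall>a\<in>S. c \<odot>\<^bsub>R\<^esub> a \<in> S)"

definition cent :: "('k, 'a) module \<Rightarrow> 'a set \<Rightarrow> 'a set" where
  "cent R X = {r \<in> carrier R. \<forall>s\<in>X. r \<otimes>\<^bsub>R\<^esub> s = s \<otimes>\<^bsub>R\<^esub> r}"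

subsection \<open>Tensor product R \<otimes>_S R, realised as the free k-vector space on R \<times> R
  modulo the subspace of balanced/bilinear relations\<close>

definition dlt :: "'b \<Rightarrow> 'b \<Rightarrow> 'k::field" where
  "dlt q p = (if p = q then 1 else 0)"

definition supp :: "('b \<Rightarrow> 'k::zero) \<Rightarrow> 'b set" where
  "supp f = {p. f p \<noteq> 0}"

definition tfree :: "('k::field, 'a) module \<Rightarrow> ('a \<times> 'a \<Rightarrow> 'k) set" where
  "tfree R = {f. finite (supp f) \<and> supp f \<subseteq> carrier R \<times> carrier R}"

inductive_set trel :: "('k::field, 'a) module \<Rightarrow> 'a set \<Rightarrow> ('a \<times> 'a \<Rightarrow> 'k) set"
  for R S where
  zero: "(\<lambda>p. 0) \<in> trel R S"
| add: "f \<in> trel R S \<Longrightarrow> g \<in> trel R S \<Longrightarrow> (\<lambda>p. f p + g p) \<in> trel R S"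
| smul: "f \<in> trel R S \<Longrightarrow> (\<lambda>p. c * f p) \<in> trel R S"
| addl: "a \<in> carrier R \<Longrightarrow> b \<in> carrier R \<Longrightarrow> c \<in> carrier R \<Longrightarrow>
     (\<lambda>p. dlt (a \<oplus>\<^bsub>R\<^esub> b, c) p - dlt (a, c) p - dlt (b, c) p) \<in> trel R S"
| addr: "a \<in> carrier R \<Longrightarrow> b \<in> carrier R \<Longrightarrow> c \<in> carrier R \<Longrightarrow>
     (\<lambda>p. dlt (a, b \<oplus>\<^bsub>R\<^esub> c) p - dlt (a, b) p - dlt (a, c) p) \<in> trel R S"
| bal: "a \<in> carrier R \<Longrightarrow> b \<in> carrier R \<Longrightarrow> s \<in> S \<Longrightarrow>
     (\<lambda>p. dlt (a \<otimes>\<^bsub>R\<^esub> s, b) p - dlt (a, s \<otimes>\<^bsub>R\<^esub> b) p) \<in> trel R S"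
| scl: "a \<in> carrier R \<Longrightarrow> b \<in> carrier R \<Longrightarrow>
     (\<lambda>p. dlt (t \<odot>\<^bsub>R\<^esub> a, b) p - t * dlt (a, b) p) \<in> trel R S"
| scr: "a \<in> carrier R \<Longrightarrow> b \<in> carrier R \<Longrightarrow>
     (\<lambda>p. dlt (a, t \<odot>\<^bsub>R\<^esub> b) p - t * dlt (a, b) p) \<in> trel R S"

definition tcls :: "('k::field, 'a) module \<Rightarrow> 'a set \<Rightarrow> ('a \<times> 'a \<Rightarrow> 'k) \<Rightarrow> ('a \<times> 'a \<Rightarrow> 'k) set" where
  "tcls R S f = {g \<in> tfree R. (\<lambda>p. g p - f p) \<in> trel R S}"

definition trep :: "'b set \<Rightarrow> 'b" where
  "trep X = (SOME f. f \<in> X)"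

text \<open>Product (a \<otimes> b)(c \<otimes> d) = a E_S(bc) \<otimes> d, extended bilinearly.\<close>
definition tmult :: "('k::field, 'a) module \<Rightarrow> 'a set \<Rightarrow> ('a \<Rightarrow> 'a) \<Rightarrow>
     ('a \<times> 'a \<Rightarrow> 'k) set \<Rightarrow> ('a \<times> 'a \<Rightarrow> 'k) set \<Rightarrow> ('a \<times> 'a \<Rightarrow> 'k) set" where
  "tmult R S E X Y = (let f = trep X; g = trep Y in
     tcls R S (\<lambda>z. \<Sum>p\<in>supp f. \<Sum>q\<in>supp g.
        f p * g q * dlt (fst p \<otimes>\<^bsub>R\<^esub> E (snd p \<otimes>\<^bsub>R\<^esub> fst q), snd q) z))"

text \<open>Basic construction R_1 = R \<otimes>_S R with unit \<Sum>_i r_i \<otimes> s_i.\<close>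
definition bc :: "('k::field, 'a) module \<Rightarrow> 'a set \<Rightarrow> ('a \<Rightarrow> 'a) \<Rightarrow> 'a list \<Rightarrow> 'a list \<Rightarrow>
     ('k, ('a \<times> 'a \<Rightarrow> 'k) set) module" where
  "bc R S E rs ss =
     \<lparr> carrier = tcls R S ` tfree R,
       monoid.mult = tmult R S E,
       one = tcls R S (\<lambda>z. \<Sum>i<length rs. dlt (rs ! i, ss ! i) z),
       zero = tcls R S (\<lambda>z. 0),
       add = (\<lambda>X Y. tcls R S (\<lambda>z. trep X z + trep Y z)),
       smult = (\<lambda>c X. tcls R S (\<lambda>z. c * trep X z)) \<rparr>"

definition bc_incl :: "('k::field, 'a) module \<Rightarrow> 'a set \<Rightarrow> 'a list \<Rightarrow> 'a list \<Rightarrow> 'a \<Rightarrow>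
     ('a \<times> 'a \<Rightarrow> 'k) set" where
  "bc_incl R S rs ss r = tcls R S (\<lambda>z. \<Sum>i<length rs. dlt (r \<otimes>\<^bsub>R\<^esub> rs ! i, ss ! i) z)"

definition bc_jones :: "('k::field, 'a) module \<Rightarrow> 'a set \<Rightarrow> ('a \<times> 'a \<Rightarrow> 'k) set" where
  "bc_jones R S = tcls R S (dlt (\<one>\<^bsub>R\<^esub>, \<one>\<^bsub>R\<^esub>))"

definition bc_E :: "('k::field, 'a) module \<Rightarrow> 'k \<Rightarrow> ('a \<times> 'a \<Rightarrow> 'k) set \<Rightarrow> 'a" where
  "bc_E R lam X = (let f = trep X in
     lam \<odot>\<^bsub>R\<^esub> (\<Oplus>\<^bsub>R\<^esub>p\<in>supp f. f p \<odot>\<^bsub>R\<^esub> (fst p \<otimes>\<^bsub>R\<^esub> snd p)))"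

text \<open>New quasi-bases \<lambda>^{-1} r_i \<otimes> 1 and 1 \<otimes> s_i.\<close>
definition bc_left :: "('k::field, 'a) module \<Rightarrow> 'a set \<Rightarrow> 'k \<Rightarrow> 'a list \<Rightarrow> ('a \<times> 'a \<Rightarrow> 'k) set list" where
  "bc_left R S lam rs = map (\<lambda>r. tcls R S (dlt (inverse lam \<odot>\<^bsub>R\<^esub> r, \<one>\<^bsub>R\<^esub>))) rs"

definition bc_right :: "('k::field, 'a) module \<Rightarrow> 'a set \<Rightarrow> 'a list \<Rightarrow> ('a \<times> 'a \<Rightarrow> 'k) set list" where
  "bc_right R S ss = map (\<lambda>s. tcls R S (dlt (\<one>\<^bsub>R\<^esub>, s))) ss"

definition free_right_basis_in :: "('k, 'b) module \<Rightarrow> 'b set \<Rightarrow> 'b set \<Rightarrow> bool" where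
  "free_right_basis_in R1 Sub X \<longleftrightarrow> (\<exists>bs. set bs \<subseteq> X \<and>
     (\<forall>x\<in>carrier R1. \<exists>!ms. length ms = length bs \<and> set ms \<subseteq> Sub \<and>
        x = (\<Oplus>\<^bsub>R1\<^esub>j\<in>{..<length bs}. bs ! j \<otimes>\<^bsub>R1\<^esub> ms ! j)))"


subsection \<open>The tower N \<subseteq> M \<subseteq> M_1 \<subseteq> M_2 for given data (M, N, E, x_i, y_i, \<lambda>)\<close>

type_synonym ('k,'a) t1 = "('a \<times> 'a \<Rightarrow> 'k) set"
type_synonym ('k,'a) t2 = "(('k,'a) t1 \<times> ('k,'a) t1 \<Rightarrow> 'k) set"

definition twM1 :: "('k::field, 'a) module \<Rightarrow> 'a set \<Rightarrow> ('a \<Rightarrow> 'a) \<Rightarrow> 'a list \<Rightarrow> 'a list \<Rightarrow> ('k, ('k,'a) t1) module" where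
  "twM1 M N E xs ys = bc M N E xs ys"
definition twi1 :: "('k::field, 'a) module \<Rightarrow> 'a set \<Rightarrow> 'a list \<Rightarrow> 'a list \<Rightarrow> 'a \<Rightarrow> ('k,'a) t1" where
  "twi1 M N xs ys = bc_incl M N xs ys"
definition twe1 :: "('k::field, 'a) module \<Rightarrow> 'a set \<Rightarrow> ('k,'a) t1" where
  "twe1 M N = bc_jones M N"
definition twEM :: "('k::field, 'a) module \<Rightarrow> 'k \<Rightarrow> ('k,'a) t1 \<Rightarrow> 'a" where
  "twEM M lam = bc_E M lam"
text \<open>M identified with its image in M_1; E_M viewed as a map into that image.\<close>
definition twM2 :: "('k::field, 'a) module \<Rightarrow> 'a set \<Rightarrow> ('a \<Rightarrow> 'a) \<Rightarrow> 'a list \<Rightarrow> 'a list \<Rightarrow> 'k \<Rightarrow> ('k, ('k,'a) t2) module" where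
  "twM2 M N E xs ys lam = bc (twM1 M N E xs ys) (twi1 M N xs ys ` carrier M)
      (twi1 M N xs ys \<circ> twEM M lam) (bc_left M N lam xs) (bc_right M N ys)"
definition twi2 :: "('k::field, 'a) module \<Rightarrow> 'a set \<Rightarrow> ('a \<Rightarrow> 'a) \<Rightarrow> 'a list \<Rightarrow> 'a list \<Rightarrow> 'k \<Rightarrow> ('k,'a) t1 \<Rightarrow> ('k,'a) t2" where
  "twi2 M N E xs ys lam = bc_incl (twM1 M N E xs ys) (twi1 M N xs ys ` carrier M) (bc_left M N lam xs) (bc_right M N ys)"
definition twe2 :: "('k::field, 'a) module \<Rightarrow> 'a set \<Rightarrow> ('a \<Rightarrow> 'a) \<Rightarrow> 'a list \<Rightarrow> 'a list \<Rightarrow> ('k,'a) t2" where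
  "twe2 M N E xs ys = bc_jones (twM1 M N E xs ys) (twi1 M N xs ys ` carrier M)"
definition twEM1 :: "('k::field, 'a) module \<Rightarrow> 'a set \<Rightarrow> ('a \<Rightarrow> 'a) \<Rightarrow> 'a list \<Rightarrow> 'a list \<Rightarrow> 'k \<Rightarrow> ('k,'a) t2 \<Rightarrow> ('k,'a) t1" where
  "twEM1 M N E xs ys lam = bc_E (twM1 M N E xs ys) lam"

definition twA where "twA M N E xs ys = cent (twM1 M N E xs ys) (twi1 M N xs ys ` N)"
definition twB where "twB M N E xs ys lam =
   cent (twM2 M N E xs ys lam) ((twi2 M N E xs ys lam \<circ> twi1 M N xs ys) ` carrier M)"
definition twF where "twF M N E xs ys lam = twEM M lam \<circ> twEM1 M N E xs ys lam"

text \<open>Counit \<epsilon>(b) = \<lambda>^{-2} F(e_2 e_1 b), with F(e_2 e_1 b) \<in> k1 identified with a scalar.\<close>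
definition counit where "counit M N E xs ys lam b = inverse lam ^ 2 *
   (THE c. twF M N E xs ys lam
      (twe2 M N E xs ys \<otimes>\<^bsub>twM2 M N E xs ys lam\<^esub> twi2 M N E xs ys lam (twe1 M N)
         \<otimes>\<^bsub>twM2 M N E xs ys lam\<^esub> b) = c \<odot>\<^bsub>M\<^esub> \<one>\<^bsub>M\<^esub>)"

definition act where "act M N E xs ys lam b x = inverse lam \<odot>\<^bsub>twM1 M N E xs ys\<^esub>
   twEM1 M N E xs ys lam (b \<otimes>\<^bsub>twM2 M N E xs ys lam\<^esub> twi2 M N E xs ys lam x
        \<otimes>\<^bsub>twM2 M N E xs ys lam\<^esub> twe2 M N E xs ys)"

end

theory Submission
  imports Defs
begin

(* The Jones idempotent e_2 lies in B = C_{M_2}(M), has counit 1 and acts on M_1 by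
   x |-> E_M(x), because e_2 x e_2 = E_M(x) e_2; so an invariant x equals E_M(x) and lies in M.
   Conversely let b be in B. Then y = E_{M_1}(b e_2) commutes with M, and C_{M_1}(M) = k1 is
   inherited from C_M(N) = k1 (as e_1 M_1 = e_1 M), so y = c1. Hence b acts on M by the
   scalar lambda^-1 c, and the trace identity E(E_M(e_1 u b)) = E(u E_M(b e_1)), taken one
   level up, shows that the counit of b is lambda^-1 c as well. *)

section \<open>Algebras over a field\<close>

locale k_algebra = fixes R :: "('k::field, 'a) module" (structure)
  assumes kalg: "kalg R"

sublocale k_algebra \<subseteq> ring R using kalg by (simp add: kalg_def)

context k_algebra begin

lemma
  shows smult_closed[simp, intro]: "a \<in> carrier R \<Longrightarrow> c \<odot> a \<in> carrier R"
    and smult_r_distr: "a \<in> carrier R \<Longrightarrow> b \<in> carrier R \<Longrightarrow> c \<odot> (a \<oplus> b) = c \<odot> a \<oplus> c \<odot> b"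
    and smult_l_distr: "a \<in> carrier R \<Longrightarrow> (c + d) \<odot> a = c \<odot> a \<oplus> d \<odot> a"
    and smult_assoc1: "a \<in> carrier R \<Longrightarrow> (c * d) \<odot> a = c \<odot> (d \<odot> a)"
    and smult_one[simp]: "a \<in> carrier R \<Longrightarrow> 1 \<odot> a = a"
    and mult_smult_left: "a \<in> carrier R \<Longrightarrow> b \<in> carrier R \<Longrightarrow> (c \<odot> a) \<otimes> b = c \<odot> (a \<otimes> b)"
    and mult_smult_right: "a \<in> carrier R \<Longrightarrow> b \<in> carrier R \<Longrightarrow> a \<otimes> (c \<odot> b) = c \<odot> (a \<otimes> b)"
  using kalg by (simp_all add: kalg_def)

lemma smult_l_null[simp]: "a \<in> carrier R \<Longrightarrow> (0::'k) \<odot> a = \<zero>"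
proof -
  assume a: "a \<in> carrier R"
  have "0 \<odot> a = 0 \<odot> a \<oplus> 0 \<odot> a" using smult_l_distr[OF a, of 0 0] by simp
  thus ?thesis using a add.l_cancel_one'[of "0 \<odot> a" "0 \<odot> a"] by simp
qed

lemma smult_r_null[simp]: "c \<odot> \<zero> = \<zero>"
  using smult_assoc1[of \<zero> c 0] by simp

lemma smult_l_minus: "a \<in> carrier R \<Longrightarrow> (- c) \<odot> a = \<ominus> (c \<odot> a)"
proof -
  assume a: "a \<in> carrier R"
  have "(- c) \<odot> a \<oplus> c \<odot> a = \<zero>" using a smult_l_distr[OF a, of "- c" c] by simp
  thus ?thesis using a by (simp add: add.inv_equality)
qed

lemma smult_as_mult: "a \<in> carrier R \<Longrightarrow> c \<odot> a = (c \<odot> \<one>) \<otimes> a"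
  using mult_smult_left[of \<one> a c] by simp

lemma smult_finsum:
  "finite A \<Longrightarrow> f \<in> A \<rightarrow> carrier R \<Longrightarrow> c \<odot> (\<Oplus>i\<in>A. f i) = (\<Oplus>i\<in>A. c \<odot> f i)"
proof (induction A rule: finite_induct)
  case empty then show ?case by simp
next
  case (insert x A)
  then show ?case by (simp add: finsum_insert smult_r_distr finsum_closed Pi_def)
qed

lemma smult_one_inj: "\<one> \<noteq> \<zero> \<Longrightarrow> c \<odot> \<one> = d \<odot> \<one> \<Longrightarrow> c = d"
proof (rule ccontr)
  assume nz: "\<one> \<noteq> \<zero>" and eq: "c \<odot> \<one> = d \<odot> \<one>" and ne: "c \<noteq> d"
  have "(c - d) \<odot> \<one> = c \<odot> \<one> \<oplus> (- d) \<odot> \<one>"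
    using smult_l_distr[of \<one> c "- d"] by simp
  also have "\<dots> = \<zero>" using eq by (simp add: smult_l_minus r_neg)
  finally have "(c - d) \<odot> \<one> = \<zero>" .
  then have "(inverse (c - d) * (c - d)) \<odot> \<one> = \<zero>" by (simp add: smult_assoc1)
  then show False using nz ne by simp
qed

lemma the_smult_one_eq: "\<one> \<noteq> \<zero> \<Longrightarrow> (THE c. d \<odot> \<one> = c \<odot> \<one>) = d"
  by (rule the_equality) (auto dest: smult_one_inj)

end

section \<open>Formal linear combinations\<close>

definition lin_ext :: "('b \<Rightarrow> 'c \<Rightarrow> 'k::field) \<Rightarrow> ('b \<Rightarrow> 'k) \<Rightarrow> 'c \<Rightarrow> 'k" where
  "lin_ext h f = (\<lambda>z. \<Sum>p\<in>supp f. f p * h p z)"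

lemma supp_iff: "p \<in> supp f \<longleftrightarrow> f p \<noteq> 0" by (simp add: supp_def)

lemma supp_dlt[simp]: "supp (dlt u) = {u}"
  by (auto simp: supp_def dlt_def)

lemma supp_lin_comb: "supp (\<lambda>p. (a::'k::field) * f p + b * g p) \<subseteq> supp f \<union> supp g"
  by (auto simp: supp_def)

lemma supp_sum_subset: "supp (\<lambda>p. \<Sum>i\<in>I. g i p) \<subseteq> (\<Union>i\<in>I. supp (g i))"
  by (auto simp: supp_def intro: ccontr)

lemma supp_sum_dlt: "supp (\<lambda>z. \<Sum>q\<in>B. c q * dlt (u q) z) \<subseteq> u ` B"
proof
  fix x assume "x \<in> supp (\<lambda>z. \<Sum>q\<in>B. c q * dlt (u q) z)"
  then have "(\<Sum>q\<in>B. c q * dlt (u q) x) \<noteq> 0" by (simp add: supp_def)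
  then obtain q where "q \<in> B" "c q * dlt (u q) x \<noteq> 0" by (meson sum.neutral)
  then show "x \<in> u ` B" by (auto simp: dlt_def split: if_splits)
qed

lemma lin_ext_superset:
  assumes "finite A" "supp f \<subseteq> A"
  shows "lin_ext h f z = (\<Sum>p\<in>A. f p * h p z)"
  unfolding lin_ext_def
  by (rule sum.mono_neutral_left) (use assms in \<open>auto simp: supp_iff\<close>)

lemma lin_ext_lin_comb:
  assumes "finite (supp f)" "finite (supp g)"
  shows "lin_ext h (\<lambda>p. a * f p + b * g p) = (\<lambda>z. a * lin_ext h f z + b * lin_ext h g z)"
proof
  fix z
  let ?A = "supp f \<union> supp g"
  have "lin_ext h (\<lambda>p. a * f p + b * g p) z = (\<Sum>p\<in>?A. (a * f p + b * g p) * h p z)"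
    by (rule lin_ext_superset) (use assms supp_lin_comb[of a f b g] in auto)
  also have "\<dots> = a * (\<Sum>p\<in>?A. f p * h p z) + b * (\<Sum>p\<in>?A. g p * h p z)"
    by (simp add: sum.distrib sum_distrib_left algebra_simps)
  also have "\<dots> = a * lin_ext h f z + b * lin_ext h g z"
    using assms by (simp add: lin_ext_superset[of ?A f] lin_ext_superset[of ?A g])
  finally show "lin_ext h (\<lambda>p. a * f p + b * g p) z = a * lin_ext h f z + b * lin_ext h g z" .
qed

lemma lin_ext_add:
  assumes "finite (supp f)" "finite (supp g)"
  shows "lin_ext h (\<lambda>p. f p + g p) = (\<lambda>z. lin_ext h f z + lin_ext h g z)"
  using lin_ext_lin_comb[OF assms, of h 1 1] by simp

lemma lin_ext_diff:
  assumes "finite (supp f)" "finite (supp g)"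
  shows "lin_ext h (\<lambda>p. f p - g p) = (\<lambda>z. lin_ext h f z - lin_ext h g z)"
  using lin_ext_lin_comb[OF assms, of h 1 "-1"] by simp

lemma lin_ext_smult:
  assumes "finite (supp f)"
  shows "lin_ext h (\<lambda>p. c * f p) = (\<lambda>z. c * lin_ext h f z)"
  using lin_ext_lin_comb[OF assms assms, of h c 0] by simp

lemma lin_ext_dlt[simp]: "lin_ext h (dlt u) = h u"
  by (rule ext) (simp add: lin_ext_def dlt_def)

lemma lin_ext_zero[simp]: "lin_ext h (\<lambda>p. 0) = (\<lambda>z. 0)"
  by (simp add: lin_ext_def supp_def)

lemma lin_ext_sum:
  assumes "finite I" "\<And>i. i \<in> I \<Longrightarrow> finite (supp (g i))"
  shows "lin_ext h (\<lambda>p. \<Sum>i\<in>I. g i p) = (\<lambda>z. \<Sum>i\<in>I. lin_ext h (g i) z)"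
proof
  fix z
  let ?A = "\<Union>i\<in>I. supp (g i)"
  have fin: "finite ?A" using assms by auto
  have "lin_ext h (\<lambda>p. \<Sum>i\<in>I. g i p) z = (\<Sum>p\<in>?A. (\<Sum>i\<in>I. g i p) * h p z)"
    by (rule lin_ext_superset[OF fin supp_sum_subset])
  also have "\<dots> = (\<Sum>i\<in>I. \<Sum>p\<in>?A. g i p * h p z)"
    by (simp add: sum_distrib_right sum.swap[of _ ?A])
  also have "\<dots> = (\<Sum>i\<in>I. lin_ext h (g i) z)"
    using assms fin by (auto intro!: sum.cong lin_ext_superset[symmetric])
  finally show "lin_ext h (\<lambda>p. \<Sum>i\<in>I. g i p) z = (\<Sum>i\<in>I. lin_ext h (g i) z)" .
qed

lemma lin_ext_sum_dlt:
  assumes "finite B"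
  shows "lin_ext h (\<lambda>z. \<Sum>q\<in>B. c q * dlt (u q) z) = (\<lambda>z. \<Sum>q\<in>B. c q * h (u q) z)"
proof -
  have "finite (supp (\<lambda>z. c q * dlt (u q) z))" for q
    by (rule finite_subset[of _ "{u q}"]) (auto simp: supp_def dlt_def)
  then show ?thesis using assms by (subst lin_ext_sum) (simp_all add: lin_ext_smult)
qed

lemma lin_ext_sum_sum_dlt:
  assumes "finite A" "finite B"
  shows "lin_ext h (\<lambda>z. \<Sum>p\<in>A. \<Sum>q\<in>B. c p q * dlt (u p q) z)
    = (\<lambda>z. \<Sum>p\<in>A. \<Sum>q\<in>B. c p q * h (u p q) z)"
proof -
  have "finite (supp (\<lambda>z. \<Sum>q\<in>B. c p q * dlt (u p q) z))" for p
    using supp_sum_dlt[of "c p" "u p" B] assms(2) finite_subset by blast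
  then show ?thesis using assms by (simp add: lin_ext_sum lin_ext_sum_dlt)
qed

lemma lin_ext_lin_kernel:
  "lin_ext (\<lambda>q z. a * h1 q z + b * h2 q z) f = (\<lambda>z. a * lin_ext h1 f z + b * lin_ext h2 f z)"
  by (rule ext) (simp add: lin_ext_def sum.distrib sum_distrib_left algebra_simps)

lemma lin_ext_kernel_diff:
  "(\<lambda>z. lin_ext h1 f z - lin_ext h2 f z) = lin_ext (\<lambda>q z. h1 q z - h2 q z) f"
  using lin_ext_lin_kernel[of 1 h1 "-1" h2 f] by simp

lemma lin_ext_kernel_add:
  "(\<lambda>z. lin_ext h1 f z + lin_ext h2 f z) = lin_ext (\<lambda>q z. h1 q z + h2 q z) f"
  using lin_ext_lin_kernel[of 1 h1 1 h2 f] by simp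

lemma lin_ext_kernel_smult: "(\<lambda>z. t * lin_ext h1 f z) = lin_ext (\<lambda>q z. t * h1 q z) f"
  using lin_ext_lin_kernel[of t h1 0 h1 f] by simp

lemma lin_ext_dlt_self: "finite (supp f) \<Longrightarrow> lin_ext dlt f = f"
proof (rule ext)
  fix x assume fin: "finite (supp f)"
  have "lin_ext dlt f x = (\<Sum>p\<in>supp f. if x = p then f p else 0)"
    unfolding lin_ext_def dlt_def by (rule sum.cong) auto
  also have "\<dots> = f x" using fin by (simp add: sum.delta supp_iff)
  finally show "lin_ext dlt f x = f x" .
qed

lemma sum_rotate3: "(\<Sum>q\<in>B. \<Sum>r\<in>C. \<Sum>p\<in>A. X p q r) = (\<Sum>p\<in>A. \<Sum>q\<in>B. \<Sum>r\<in>C. X p q r)"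
proof -
  have "(\<Sum>q\<in>B. \<Sum>r\<in>C. \<Sum>p\<in>A. X p q r) = (\<Sum>q\<in>B. \<Sum>p\<in>A. \<Sum>r\<in>C. X p q r)"
    by (rule sum.cong[OF refl], rule sum.swap)
  also have "\<dots> = (\<Sum>p\<in>A. \<Sum>q\<in>B. \<Sum>r\<in>C. X p q r)" by (rule sum.swap)
  finally show ?thesis .
qed

locale strongly_separable = k_algebra R for R :: "('k::field,'a) module" (structure) +
  fixes S :: "'a set" and E :: "'a \<Rightarrow> 'a" and rs ss :: "'a list" and lam :: 'k
  assumes subalg: "subalg R S"
    and E_in_S[simp]: "m \<in> carrier R \<Longrightarrow> E m \<in> S"
    and E_add: "a \<in> carrier R \<Longrightarrow> b \<in> carrier R \<Longrightarrow> E (a \<oplus> b) = E a \<oplus> E b"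
    and E_mult_left: "s \<in> S \<Longrightarrow> m \<in> carrier R \<Longrightarrow> E (s \<otimes> m) = s \<otimes> E m"
    and E_mult_right: "s \<in> S \<Longrightarrow> m \<in> carrier R \<Longrightarrow> E (m \<otimes> s) = E m \<otimes> s"
    and E_one: "E \<one> = \<one>"
    and length_eq: "length rs = length ss"
    and rs_closed: "set rs \<subseteq> carrier R" and ss_closed: "set ss \<subseteq> carrier R"
    and quasi_basis_left: "m \<in> carrier R \<Longrightarrow> (\<Oplus>i\<in>{..<length rs}. E (m \<otimes> rs ! i) \<otimes> ss ! i) = m"
    and quasi_basis_right: "m \<in> carrier R \<Longrightarrow> (\<Oplus>i\<in>{..<length rs}. rs ! i \<otimes> E (ss ! i \<otimes> m)) = m"
    and lam_nonzero: "lam \<noteq> 0"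
    and quasi_basis_trace: "(\<Oplus>i\<in>{..<length rs}. rs ! i \<otimes> ss ! i) = inverse lam \<odot> \<one>"

context strongly_separable begin

lemma S_closed[simp]: "s \<in> S \<Longrightarrow> s \<in> carrier R"
  using subalg by (auto simp: subalg_def)

lemma one_S[simp]: "\<one> \<in> S"
  using subalg by (simp add: subalg_def)

lemma smult_S: "a \<in> S \<Longrightarrow> c \<odot> a \<in> S"
  using subalg by (simp add: subalg_def)

lemma E_closed[simp]: "m \<in> carrier R \<Longrightarrow> E m \<in> carrier R"
  by simp

lemma E_smult: "m \<in> carrier R \<Longrightarrow> E (c \<odot> m) = c \<odot> E m"
  using E_mult_left[of "c \<odot> \<one>" m] smult_as_mult[of m c] smult_as_mult[of "E m" c]
  by (simp add: smult_S)

lemma inverse_lam_smult_cancel: "x \<in> carrier R \<Longrightarrow> inverse lam \<odot> (lam \<odot> x) = x"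
  using lam_nonzero by (simp add: smult_assoc1[symmetric])

lemma lam_smult_inverse_cancel: "x \<in> carrier R \<Longrightarrow> lam \<odot> (inverse lam \<odot> x) = x"
  using lam_nonzero by (simp add: smult_assoc1[symmetric])

lemma rs_nth[simp]: "i < length rs \<Longrightarrow> rs ! i \<in> carrier R" using rs_closed by auto
lemma ss_nth[simp]: "i < length rs \<Longrightarrow> ss ! i \<in> carrier R" using ss_closed length_eq by auto

abbreviation Rel :: "('a \<times> 'a \<Rightarrow> 'k) set" where "Rel \<equiv> trel R S"
abbreviation Formal :: "('a \<times> 'a \<Rightarrow> 'k) set" where "Formal \<equiv> tfree R"
abbreviation cls :: "('a \<times> 'a \<Rightarrow> 'k) \<Rightarrow> ('a \<times> 'a \<Rightarrow> 'k) set" where "cls \<equiv> tcls R S"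

lemma Formal_iff: "f \<in> Formal \<longleftrightarrow> finite (supp f) \<and> supp f \<subseteq> carrier R \<times> carrier R"
  by (simp add: tfree_def)

lemma Formal_finite: "f \<in> Formal \<Longrightarrow> finite (supp f)" by (simp add: Formal_iff)
lemma Formal_supp: "f \<in> Formal \<Longrightarrow> p \<in> supp f \<Longrightarrow> fst p \<in> carrier R \<and> snd p \<in> carrier R"
  by (auto simp: Formal_iff)

lemma Formal_dlt[simp]: "a \<in> carrier R \<Longrightarrow> b \<in> carrier R \<Longrightarrow> dlt (a, b) \<in> Formal"
  by (simp add: Formal_iff)

lemma Formal_lin_comb: "f \<in> Formal \<Longrightarrow> g \<in> Formal \<Longrightarrow> (\<lambda>p. a * f p + b * g p) \<in> Formal"
proof -
  assume f: "f \<in> Formal" and g: "g \<in> Formal"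
  have s: "supp (\<lambda>p. a * f p + b * g p) \<subseteq> supp f \<union> supp g" by (rule supp_lin_comb)
  have "finite (supp f \<union> supp g)" using f g Formal_finite by blast
  hence "finite (supp (\<lambda>p. a * f p + b * g p))" using s finite_subset by blast
  moreover have "supp (\<lambda>p. a * f p + b * g p) \<subseteq> carrier R \<times> carrier R"
    using s f g unfolding Formal_iff by blast
  ultimately show ?thesis by (simp add: Formal_iff)
qed

lemma Formal_add: "f \<in> Formal \<Longrightarrow> g \<in> Formal \<Longrightarrow> (\<lambda>p. f p + g p) \<in> Formal"
  using Formal_lin_comb[of f g 1 1] by simp
lemma Formal_diff: "f \<in> Formal \<Longrightarrow> g \<in> Formal \<Longrightarrow> (\<lambda>p. f p - g p) \<in> Formal"
  using Formal_lin_comb[of f g 1 "-1"] by simp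
lemma Formal_smult: "f \<in> Formal \<Longrightarrow> (\<lambda>p. c * f p) \<in> Formal"
  using Formal_lin_comb[of f f c 0] by simp
lemma Formal_zero[simp]: "(\<lambda>p. 0) \<in> Formal"
  by (simp add: Formal_iff supp_def)

lemma Formal_sum: "finite I \<Longrightarrow> (\<And>i. i \<in> I \<Longrightarrow> g i \<in> Formal) \<Longrightarrow> (\<lambda>p. \<Sum>i\<in>I. g i p) \<in> Formal"
proof (induction I rule: finite_induct)
  case empty then show ?case by simp
next
  case (insert x I)
  then show ?case using Formal_add[of "g x" "\<lambda>p. \<Sum>i\<in>I. g i p"] by simp
qed

lemma Formal_lin_ext: "finite (supp f) \<Longrightarrow> (\<And>p. p \<in> supp f \<Longrightarrow> h p \<in> Formal) \<Longrightarrow> lin_ext h f \<in> Formal"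
  unfolding lin_ext_def by (rule Formal_sum) (auto intro: Formal_smult)

lemma Rel_Formal: "f \<in> Rel \<Longrightarrow> f \<in> Formal"
proof (induction rule: trel.induct)
  case zero then show ?case by simp
next
  case (add f g) then show ?case by (simp add: Formal_add)
next
  case (smul f c) then show ?case by (simp add: Formal_smult)
next
  case (addl a b c) then show ?case by (intro Formal_diff Formal_dlt) auto
next
  case (addr a b c) then show ?case by (intro Formal_diff Formal_dlt) auto
next
  case (bal a b s) then show ?case by (intro Formal_diff Formal_dlt) auto
next
  case (scl a b t) then show ?case by (intro Formal_diff Formal_smult Formal_dlt) auto
next
  case (scr a b t) then show ?case by (intro Formal_diff Formal_smult Formal_dlt) auto
qed

lemma Rel_lin_comb: "f \<in> Rel \<Longrightarrow> g \<in> Rel \<Longrightarrow> (\<lambda>p. a * f p + b * g p) \<in> Rel"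
  using trel.add[OF trel.smul[of f R S a] trel.smul[of g R S b]] by simp
lemma Rel_add: "f \<in> Rel \<Longrightarrow> g \<in> Rel \<Longrightarrow> (\<lambda>p. f p + g p) \<in> Rel"
  by (rule trel.add)
lemma Rel_smult: "f \<in> Rel \<Longrightarrow> (\<lambda>p. c * f p) \<in> Rel"
  by (rule trel.smul)
lemma Rel_zero[simp]: "(\<lambda>p. 0) \<in> Rel" by (rule trel.zero)

lemma Rel_sum: "finite I \<Longrightarrow> (\<And>i. i \<in> I \<Longrightarrow> g i \<in> Rel) \<Longrightarrow> (\<lambda>p. \<Sum>i\<in>I. g i p) \<in> Rel"
proof (induction I rule: finite_induct)
  case empty then show ?case by simp
next
  case (insert x I)
  then show ?case using Rel_add[of "g x" "\<lambda>p. \<Sum>i\<in>I. g i p"] by simp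
qed

lemma Rel_lin_ext: "finite (supp f) \<Longrightarrow> (\<And>p. p \<in> supp f \<Longrightarrow> h p \<in> Rel) \<Longrightarrow> lin_ext h f \<in> Rel"
  unfolding lin_ext_def by (rule Rel_sum) (auto intro: Rel_smult)

definition eqv :: "('a \<times> 'a \<Rightarrow> 'k) \<Rightarrow> ('a \<times> 'a \<Rightarrow> 'k) \<Rightarrow> bool" where
  "eqv f g \<longleftrightarrow> (\<lambda>p. f p - g p) \<in> Rel"

lemma eqv_refl[simp]: "eqv f f" by (simp add: eqv_def)
lemma eqv_sym: "eqv f g \<Longrightarrow> eqv g f"
  unfolding eqv_def using Rel_smult[of "\<lambda>p. f p - g p" "-1"] by simp
lemma eqv_trans[trans]: "eqv f g \<Longrightarrow> eqv g h \<Longrightarrow> eqv f h"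
  unfolding eqv_def using Rel_add[of "\<lambda>p. f p - g p" "\<lambda>p. g p - h p"] by simp
lemma eq_eqv_trans[trans]: "f = g \<Longrightarrow> eqv g h \<Longrightarrow> eqv f h" by simp
lemma eqv_eq_trans[trans]: "eqv f g \<Longrightarrow> g = h \<Longrightarrow> eqv f h" by simp
lemma eqv_lin: "eqv f f' \<Longrightarrow> eqv g g' \<Longrightarrow> eqv (\<lambda>p. a * f p + b * g p) (\<lambda>p. a * f' p + b * g' p)"
  unfolding eqv_def using Rel_lin_comb[of "\<lambda>p. f p - f' p" "\<lambda>p. g p - g' p" a b]
  by (simp add: algebra_simps)
lemma eqv_add: "eqv f f' \<Longrightarrow> eqv g g' \<Longrightarrow> eqv (\<lambda>p. f p + g p) (\<lambda>p. f' p + g' p)"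
  using eqv_lin[of f f' g g' 1 1] by simp
lemma eqv_smult: "eqv f f' \<Longrightarrow> eqv (\<lambda>p. c * f p) (\<lambda>p. c * f' p)"
  using eqv_lin[of f f' f f' c 0] by simp
lemma eqv_sum: "finite I \<Longrightarrow> (\<And>i. i \<in> I \<Longrightarrow> eqv (g i) (g' i)) \<Longrightarrow>
    eqv (\<lambda>p. \<Sum>i\<in>I. g i p) (\<lambda>p. \<Sum>i\<in>I. g' i p)"
  unfolding eqv_def using Rel_sum[of I "\<lambda>i p. g i p - g' i p"] by (simp add: sum_subtractf)
lemma eqv_dlt_add_left: "a \<in> carrier R \<Longrightarrow> b \<in> carrier R \<Longrightarrow> c \<in> carrier R \<Longrightarrow>
  eqv (dlt (a \<oplus> b, c)) (\<lambda>p. dlt (a, c) p + dlt (b, c) p)"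
  unfolding eqv_def using trel.addl[of a R b c S] by (simp add: algebra_simps)
lemma eqv_dlt_add_right: "a \<in> carrier R \<Longrightarrow> b \<in> carrier R \<Longrightarrow> c \<in> carrier R \<Longrightarrow>
  eqv (dlt (a, b \<oplus> c)) (\<lambda>p. dlt (a, b) p + dlt (a, c) p)"
  unfolding eqv_def using trel.addr[of a R b c S] by (simp add: algebra_simps)
lemma eqv_dlt_balanced: "a \<in> carrier R \<Longrightarrow> b \<in> carrier R \<Longrightarrow> s \<in> S \<Longrightarrow>
  eqv (dlt (a \<otimes> s, b)) (dlt (a, s \<otimes> b))"
  unfolding eqv_def using trel.bal[of a R b s S] by simp
lemma eqv_dlt_smult_left: "a \<in> carrier R \<Longrightarrow> b \<in> carrier R \<Longrightarrow>
  eqv (dlt (t \<odot> a, b)) (\<lambda>p. t * dlt (a, b) p)"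
  unfolding eqv_def using trel.scl[of a R b t S] by simp
lemma eqv_dlt_smult_right: "a \<in> carrier R \<Longrightarrow> b \<in> carrier R \<Longrightarrow>
  eqv (dlt (a, t \<odot> b)) (\<lambda>p. t * dlt (a, b) p)"
  unfolding eqv_def using trel.scr[of a R b t S] by simp

lemma eqv_dlt_zero_left: "b \<in> carrier R \<Longrightarrow> eqv (dlt (\<zero>, b)) (\<lambda>p. 0)"
  using eqv_dlt_smult_left[of \<zero> b 0] by simp
lemma eqv_dlt_zero_right: "a \<in> carrier R \<Longrightarrow> eqv (dlt (a, \<zero>)) (\<lambda>p. 0)"
  using eqv_dlt_smult_right[of a \<zero> 0] by simp

lemma eqv_dlt_finsum_left:
  "finite I \<Longrightarrow> (\<And>i. i \<in> I \<Longrightarrow> a i \<in> carrier R) \<Longrightarrow> b \<in> carrier R \<Longrightarrow>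
    eqv (dlt (\<Oplus>i\<in>I. a i, b)) (\<lambda>p. \<Sum>i\<in>I. dlt (a i, b) p)"
proof (induction I rule: finite_induct)
  case empty then show ?case by (simp add: eqv_dlt_zero_left)
next
  case (insert x I)
  then have a: "a \<in> I \<rightarrow> carrier R" "a x \<in> carrier R" by auto
  have "dlt (\<Oplus>i\<in>insert x I. a i, b) = dlt (a x \<oplus> (\<Oplus>i\<in>I. a i), b)"
    using insert.hyps a by (simp add: finsum_insert)
  also have "eqv \<dots> (\<lambda>p. dlt (a x, b) p + dlt (\<Oplus>i\<in>I. a i, b) p)"
    using a insert.prems by (intro eqv_dlt_add_left finsum_closed)
  also have "eqv \<dots> (\<lambda>p. dlt (a x, b) p + (\<Sum>i\<in>I. dlt (a i, b) p))"
    using insert by (intro eqv_add eqv_refl) auto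
  also have "\<dots> = (\<lambda>p. \<Sum>i\<in>insert x I. dlt (a i, b) p)"
    using insert.hyps by simp
  finally show ?case .
qed

lemma eqv_dlt_finsum_right:
  "finite I \<Longrightarrow> (\<And>i. i \<in> I \<Longrightarrow> b i \<in> carrier R) \<Longrightarrow> a \<in> carrier R \<Longrightarrow>
    eqv (dlt (a, \<Oplus>i\<in>I. b i)) (\<lambda>p. \<Sum>i\<in>I. dlt (a, b i) p)"
proof (induction I rule: finite_induct)
  case empty then show ?case by (simp add: eqv_dlt_zero_right)
next
  case (insert x I)
  then have b: "b \<in> I \<rightarrow> carrier R" "b x \<in> carrier R" by auto
  have "dlt (a, \<Oplus>i\<in>insert x I. b i) = dlt (a, b x \<oplus> (\<Oplus>i\<in>I. b i))"
    using insert.hyps b by (simp add: finsum_insert)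
  also have "eqv \<dots> (\<lambda>p. dlt (a, b x) p + dlt (a, \<Oplus>i\<in>I. b i) p)"
    using b insert.prems by (intro eqv_dlt_add_right finsum_closed)
  also have "eqv \<dots> (\<lambda>p. dlt (a, b x) p + (\<Sum>i\<in>I. dlt (a, b i) p))"
    using insert by (intro eqv_add eqv_refl) auto
  also have "\<dots> = (\<lambda>p. \<Sum>i\<in>insert x I. dlt (a, b i) p)"
    using insert.hyps by simp
  finally show ?case .
qed

lemma lin_ext_eqv:
  "finite (supp g) \<Longrightarrow> (\<And>q. q \<in> supp g \<Longrightarrow> eqv (h1 q) (h2 q)) \<Longrightarrow> eqv (lin_ext h1 g) (lin_ext h2 g)"
  unfolding eqv_def lin_ext_kernel_diff by (rule Rel_lin_ext) (simp_all only: eqv_def)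

definition tensor_compatible :: "('a \<times> 'a \<Rightarrow> 'a \<times> 'a \<Rightarrow> 'k) \<Rightarrow> bool" where
  "tensor_compatible h \<longleftrightarrow>
    (\<forall>a\<in>carrier R. \<forall>b\<in>carrier R. \<forall>c\<in>carrier R.
       eqv (h (a \<oplus> b, c)) (\<lambda>z. h (a, c) z + h (b, c) z) \<and>
       eqv (h (a, b \<oplus> c)) (\<lambda>z. h (a, b) z + h (a, c) z)) \<and>
    (\<forall>a\<in>carrier R. \<forall>b\<in>carrier R. \<forall>s\<in>S. eqv (h (a \<otimes> s, b)) (h (a, s \<otimes> b))) \<and>
    (\<forall>a\<in>carrier R. \<forall>b\<in>carrier R. \<forall>t.
       eqv (h (t \<odot> a, b)) (\<lambda>z. t * h (a, b) z) \<and> eqv (h (a, t \<odot> b)) (\<lambda>z. t * h (a, b) z))"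

lemma lin_ext_Rel:
  assumes h: "tensor_compatible h"
  shows "f \<in> Rel \<Longrightarrow> lin_ext h f \<in> Rel"
proof (induction rule: trel.induct)
  case zero then show ?case by simp
next
  case (add f g) then show ?case by (simp add: lin_ext_add Formal_finite Rel_Formal Rel_add)
next
  case (smul f c) then show ?case by (simp add: lin_ext_smult Formal_finite Rel_Formal Rel_smult)
next
  case (addl a b c)
  then have "(\<lambda>z. h (a \<oplus> b, c) z - h (a, c) z - h (b, c) z) \<in> Rel"
    using h by (simp add: tensor_compatible_def eqv_def diff_diff_eq)
  with addl show ?case by (simp add: lin_ext_diff Formal_finite Formal_diff)
next
  case (addr a b c)
  then have "(\<lambda>z. h (a, b \<oplus> c) z - h (a, b) z - h (a, c) z) \<in> Rel"
    using h by (simp add: tensor_compatible_def eqv_def diff_diff_eq)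
  with addr show ?case by (simp add: lin_ext_diff Formal_finite Formal_diff)
next
  case (bal a b s) then show ?case
    using h by (simp add: tensor_compatible_def lin_ext_diff Formal_finite eqv_def)
next
  case (scl a b t) then show ?case
    using h by (simp add: tensor_compatible_def lin_ext_diff lin_ext_smult Formal_finite Formal_smult eqv_def)
next
  case (scr a b t) then show ?case
    using h by (simp add: tensor_compatible_def lin_ext_diff lin_ext_smult Formal_finite Formal_smult eqv_def)
qed

lemma tensor_compatible_lin_ext:
  assumes "finite (supp g)" and "\<And>q. q \<in> supp g \<Longrightarrow> tensor_compatible (\<lambda>p. k p q)"
  shows "tensor_compatible (\<lambda>p. lin_ext (k p) g)"
  using assms unfolding tensor_compatible_def lin_ext_kernel_add lin_ext_kernel_smult
  by (intro conjI ballI allI lin_ext_eqv) auto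

abbreviation pair_mult :: "'a \<times> 'a \<Rightarrow> 'a \<times> 'a \<Rightarrow> 'a \<times> 'a" where
  "pair_mult p q \<equiv> (fst p \<otimes> E (snd p \<otimes> fst q), snd q)"

definition fmult :: "('a \<times> 'a \<Rightarrow> 'k) \<Rightarrow> ('a \<times> 'a \<Rightarrow> 'k) \<Rightarrow> ('a \<times> 'a \<Rightarrow> 'k)" where
  "fmult f g = (\<lambda>z. \<Sum>p\<in>supp f. \<Sum>q\<in>supp g. f p * g q * dlt (pair_mult p q) z)"

lemma fmult_lin_ext_left: "fmult f g = lin_ext (\<lambda>p. lin_ext (\<lambda>q. dlt (pair_mult p q)) g) f"
  unfolding fmult_def lin_ext_def by (simp add: sum_distrib_left mult.assoc)

lemma fmult_lin_ext_right: "fmult f g = lin_ext (\<lambda>q. lin_ext (\<lambda>p. dlt (pair_mult p q)) f) g"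
  unfolding fmult_def lin_ext_def
  by (rule ext, subst sum.swap) (simp add: sum_distrib_left ac_simps)

lemma fmult_dlt_left: "fmult (dlt p) g = lin_ext (\<lambda>q. dlt (pair_mult p q)) g"
  by (simp add: fmult_lin_ext_left)
lemma fmult_dlt_right: "fmult f (dlt q) = lin_ext (\<lambda>p. dlt (pair_mult p q)) f"
  by (simp add: fmult_lin_ext_right)
lemma fmult_dlt: "fmult (dlt p) (dlt q) = dlt (pair_mult p q)"
  by (simp add: fmult_lin_ext_left)

lemma fmult_Formal: "f \<in> Formal \<Longrightarrow> g \<in> Formal \<Longrightarrow> fmult f g \<in> Formal"
  unfolding fmult_lin_ext_left
proof (intro Formal_lin_ext Formal_finite)
  fix p q assume f: "f \<in> Formal" and g: "g \<in> Formal" and p: "p \<in> supp f" and q: "q \<in> supp g"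
  then show "dlt (pair_mult p q) \<in> Formal" using Formal_supp[OF f p] Formal_supp[OF g q] by simp
qed

lemma fmult_lin_comb_left: "finite (supp f) \<Longrightarrow> finite (supp f') \<Longrightarrow>
   fmult (\<lambda>p. a * f p + b * f' p) g = (\<lambda>z. a * fmult f g z + b * fmult f' g z)"
  unfolding fmult_lin_ext_left by (rule lin_ext_lin_comb)
lemma fmult_lin_comb_right: "finite (supp g) \<Longrightarrow> finite (supp g') \<Longrightarrow>
   fmult f (\<lambda>p. a * g p + b * g' p) = (\<lambda>z. a * fmult f g z + b * fmult f g' z)"
  unfolding fmult_lin_ext_right by (rule lin_ext_lin_comb)

lemma tensor_compatible_pair_mult_left:
  assumes q: "fst q \<in> carrier R" "snd q \<in> carrier R"
  shows "tensor_compatible (\<lambda>p. dlt (pair_mult p q))"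
  unfolding tensor_compatible_def
proof (intro conjI ballI allI)
  fix a b c assume abc: "a \<in> carrier R" "b \<in> carrier R" "c \<in> carrier R"
  show "eqv (dlt (pair_mult (a \<oplus> b, c) q)) (\<lambda>z. dlt (pair_mult (a, c) q) z + dlt (pair_mult (b, c) q) z)"
    using eqv_dlt_add_left[of "a \<otimes> E (c \<otimes> fst q)" "b \<otimes> E (c \<otimes> fst q)" "snd q"] abc q
    by (simp add: l_distr)
  show "eqv (dlt (pair_mult (a, b \<oplus> c) q)) (\<lambda>z. dlt (pair_mult (a, b) q) z + dlt (pair_mult (a, c) q) z)"
    using eqv_dlt_add_left[of "a \<otimes> E (b \<otimes> fst q)" "a \<otimes> E (c \<otimes> fst q)" "snd q"] abc q
    by (simp add: l_distr r_distr E_add)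
next
  fix a b s assume "a \<in> carrier R" "b \<in> carrier R" "s \<in> S"
  then show "eqv (dlt (pair_mult (a \<otimes> s, b) q)) (dlt (pair_mult (a, s \<otimes> b) q))"
    using q by (simp add: m_assoc E_mult_left)
next
  fix a b t assume ab: "a \<in> carrier R" "b \<in> carrier R"
  then show "eqv (dlt (pair_mult (t \<odot> a, b) q)) (\<lambda>z. t * dlt (pair_mult (a, b) q) z)"
    and "eqv (dlt (pair_mult (a, t \<odot> b) q)) (\<lambda>z. t * dlt (pair_mult (a, b) q) z)"
    using eqv_dlt_smult_left[of "a \<otimes> E (b \<otimes> fst q)" "snd q" t] q
    by (simp_all add: mult_smult_left mult_smult_right E_smult)
qed

lemma tensor_compatible_pair_mult_right:
  assumes p: "fst p \<in> carrier R" "snd p \<in> carrier R"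
  shows "tensor_compatible (\<lambda>q. dlt (pair_mult p q))"
  unfolding tensor_compatible_def
proof (intro conjI ballI allI)
  fix a b c assume abc: "a \<in> carrier R" "b \<in> carrier R" "c \<in> carrier R"
  show "eqv (dlt (pair_mult p (a \<oplus> b, c))) (\<lambda>z. dlt (pair_mult p (a, c)) z + dlt (pair_mult p (b, c)) z)"
    using eqv_dlt_add_left[of "fst p \<otimes> E (snd p \<otimes> a)" "fst p \<otimes> E (snd p \<otimes> b)" c] abc p
    by (simp add: r_distr E_add)
  show "eqv (dlt (pair_mult p (a, b \<oplus> c))) (\<lambda>z. dlt (pair_mult p (a, b)) z + dlt (pair_mult p (a, c)) z)"
    using eqv_dlt_add_right[of "fst p \<otimes> E (snd p \<otimes> a)" b c] abc p by simp
next
  fix a b s assume "a \<in> carrier R" "b \<in> carrier R" "s \<in> S"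
  then show "eqv (dlt (pair_mult p (a \<otimes> s, b))) (dlt (pair_mult p (a, s \<otimes> b)))"
    using p eqv_dlt_balanced[of "fst p \<otimes> E (snd p \<otimes> a)" b s]
    by (simp add: m_assoc[symmetric] E_mult_right)
next
  fix a b t assume ab: "a \<in> carrier R" "b \<in> carrier R"
  then show "eqv (dlt (pair_mult p (t \<odot> a, b))) (\<lambda>z. t * dlt (pair_mult p (a, b)) z)"
    and "eqv (dlt (pair_mult p (a, t \<odot> b))) (\<lambda>z. t * dlt (pair_mult p (a, b)) z)"
    using eqv_dlt_smult_left[of "fst p \<otimes> E (snd p \<otimes> a)" b t]
      eqv_dlt_smult_right[of "fst p \<otimes> E (snd p \<otimes> a)" b t] p
    by (simp_all add: mult_smult_right E_smult)
qed

lemma fmult_Rel_left: "f \<in> Rel \<Longrightarrow> g \<in> Formal \<Longrightarrow> fmult f g \<in> Rel"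
  unfolding fmult_lin_ext_left
  by (intro lin_ext_Rel tensor_compatible_lin_ext tensor_compatible_pair_mult_left)
    (auto dest: Formal_supp simp: Formal_finite)

lemma fmult_Rel_right: "f \<in> Formal \<Longrightarrow> g \<in> Rel \<Longrightarrow> fmult f g \<in> Rel"
  unfolding fmult_lin_ext_right
  by (intro lin_ext_Rel tensor_compatible_lin_ext tensor_compatible_pair_mult_right)
    (auto dest: Formal_supp simp: Formal_finite)

lemma fmult_eqv:
  assumes f: "f \<in> Formal" and f': "f' \<in> Formal" and g: "g \<in> Formal" and g': "g' \<in> Formal"
    and ef: "eqv f f'" and eg: "eqv g g'"
  shows "eqv (fmult f g) (fmult f' g')"
proof -
  have "(\<lambda>z. fmult f g z - fmult f' g z) = fmult (\<lambda>p. f p - f' p) g"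
    using fmult_lin_comb_left[OF Formal_finite[OF f] Formal_finite[OF f'], of 1 "-1" g] by simp
  then have "eqv (fmult f g) (fmult f' g)"
    using ef g fmult_Rel_left by (simp add: eqv_def)
  also have "(\<lambda>z. fmult f' g z - fmult f' g' z) = fmult f' (\<lambda>p. g p - g' p)"
    using fmult_lin_comb_right[OF Formal_finite[OF g] Formal_finite[OF g'], of f' 1 "-1"] by simp
  then have "eqv (fmult f' g) (fmult f' g')"
    using eg f' fmult_Rel_right by (simp add: eqv_def)
  finally show ?thesis .
qed



section \<open>The basic construction as an algebra\<close>

abbreviation R1 :: "('k, ('k, 'a) t1) module" where "R1 \<equiv> bc R S E rs ss"
definition unit_rep :: "('a \<times> 'a \<Rightarrow> 'k)" where
  "unit_rep = (\<lambda>z. \<Sum>i<length rs. dlt (rs ! i, ss ! i) z)"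

lemma unit_rep_Formal: "unit_rep \<in> Formal" unfolding unit_rep_def by (rule Formal_sum) auto

lemma cls_eq: "cls f = {h \<in> Formal. eqv h f}" by (simp add: tcls_def eqv_def)
lemma cls_self: "f \<in> Formal \<Longrightarrow> f \<in> cls f" by (simp add: cls_eq)
lemma cls_eq_iff: "f \<in> Formal \<Longrightarrow> g \<in> Formal \<Longrightarrow> cls f = cls g \<longleftrightarrow> eqv f g"
proof
  assume f: "f \<in> Formal" and g: "g \<in> Formal" and "cls f = cls g"
  then have "f \<in> cls g" using cls_self by auto
  then show "eqv f g" by (simp add: cls_eq)
next
  assume f: "f \<in> Formal" and g: "g \<in> Formal" and e: "eqv f g"
  show "cls f = cls g" unfolding cls_eq using e eqv_trans eqv_sym by blast
qed
lemma cls_eqI: "f \<in> Formal \<Longrightarrow> g \<in> Formal \<Longrightarrow> eqv f g \<Longrightarrow> cls f = cls g" using cls_eq_iff by blast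
lemma trep_cls: "f \<in> Formal \<Longrightarrow> trep (cls f) \<in> Formal \<and> eqv (trep (cls f)) f"
proof -
  assume f: "f \<in> Formal"
  have "trep (cls f) \<in> cls f" unfolding trep_def by (rule someI[of _ f]) (rule cls_self[OF f])
  then show ?thesis by (simp add: cls_eq)
qed

lemma carrier_R1: "carrier R1 = cls ` Formal" by (simp add: bc_def)
lemma R1E: "X \<in> carrier R1 \<Longrightarrow> (\<And>f. f \<in> Formal \<Longrightarrow> X = cls f \<Longrightarrow> P) \<Longrightarrow> P" by (auto simp: carrier_R1)
lemma cls_closed[simp]: "f \<in> Formal \<Longrightarrow> cls f \<in> carrier R1" by (simp add: carrier_R1)

lemma add_cls: "f \<in> Formal \<Longrightarrow> g \<in> Formal \<Longrightarrow> cls f \<oplus>\<^bsub>R1\<^esub> cls g = cls (\<lambda>p. f p + g p)"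
proof -
  assume f: "f \<in> Formal" and g: "g \<in> Formal"
  have "cls f \<oplus>\<^bsub>R1\<^esub> cls g = cls (\<lambda>z. trep (cls f) z + trep (cls g) z)" by (simp add: bc_def)
  also have "\<dots> = cls (\<lambda>p. f p + g p)"
    by (rule cls_eqI) (use trep_cls[OF f] trep_cls[OF g] f g in \<open>auto intro: Formal_add eqv_add\<close>)
  finally show ?thesis .
qed

lemma smult_cls: "f \<in> Formal \<Longrightarrow> c \<odot>\<^bsub>R1\<^esub> cls f = cls (\<lambda>p. c * f p)"
proof -
  assume f: "f \<in> Formal"
  have "c \<odot>\<^bsub>R1\<^esub> cls f = cls (\<lambda>z. c * trep (cls f) z)" by (simp add: bc_def)
  also have "\<dots> = cls (\<lambda>p. c * f p)"
    by (rule cls_eqI) (use trep_cls[OF f] f in \<open>auto intro: Formal_smult eqv_smult\<close>)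
  finally show ?thesis .
qed

lemma mult_cls: "f \<in> Formal \<Longrightarrow> g \<in> Formal \<Longrightarrow> cls f \<otimes>\<^bsub>R1\<^esub> cls g = cls (fmult f g)"
proof -
  assume f: "f \<in> Formal" and g: "g \<in> Formal"
  have "cls f \<otimes>\<^bsub>R1\<^esub> cls g = cls (fmult (trep (cls f)) (trep (cls g)))"
    by (simp add: bc_def tmult_def fmult_def Let_def)
  also have "\<dots> = cls (fmult f g)"
    by (rule cls_eqI) (use trep_cls[OF f] trep_cls[OF g] f g in \<open>auto intro: fmult_Formal fmult_eqv\<close>)
  finally show ?thesis .
qed

lemma zero_R1_cls: "\<zero>\<^bsub>R1\<^esub> = cls (\<lambda>p. 0)" by (simp add: bc_def)
lemma one_R1_cls: "\<one>\<^bsub>R1\<^esub> = cls unit_rep" by (simp add: bc_def unit_rep_def)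

lemma pair_mult_assoc:
  assumes "fst p \<in> carrier R" "snd p \<in> carrier R" "fst q \<in> carrier R" "snd q \<in> carrier R"
    "fst r \<in> carrier R"
  shows "pair_mult (pair_mult p q) r = pair_mult p (pair_mult q r)"
proof -
  have "E (snd p \<otimes> (fst q \<otimes> E (snd q \<otimes> fst r))) = E (snd p \<otimes> fst q) \<otimes> E (snd q \<otimes> fst r)"
    using assms by (simp add: m_assoc[symmetric] E_mult_right)
  then show ?thesis using assms by (simp add: m_assoc)
qed

lemma fmult_fmult_left:
  assumes "finite (supp f)" "finite (supp g)"
  shows "fmult (fmult f g) h z =
    (\<Sum>p\<in>supp f. \<Sum>q\<in>supp g. \<Sum>r\<in>supp h. f p * g q * h r * dlt (pair_mult (pair_mult p q) r) z)"
proof -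
  have "fmult (fmult f g) h = lin_ext (\<lambda>p. fmult (dlt p) h) (fmult f g)"
    by (simp only: fmult_lin_ext_left[of "fmult f g" h] fmult_dlt_left)
  also have "\<dots> = (\<lambda>z. \<Sum>p\<in>supp f. \<Sum>q\<in>supp g. f p * g q * fmult (dlt (pair_mult p q)) h z)"
    unfolding fmult_def[of f g] by (simp only: lin_ext_sum_sum_dlt[OF assms])
  finally show ?thesis by (simp add: fmult_dlt_left lin_ext_def sum_distrib_left mult.assoc)
qed

lemma fmult_fmult_right:
  assumes "finite (supp g)" "finite (supp h)"
  shows "fmult f (fmult g h) z =
    (\<Sum>q\<in>supp g. \<Sum>r\<in>supp h. \<Sum>p\<in>supp f. f p * g q * h r * dlt (pair_mult p (pair_mult q r)) z)"
proof -
  have "fmult f (fmult g h) = lin_ext (\<lambda>q. fmult f (dlt q)) (fmult g h)"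
    by (simp only: fmult_lin_ext_right[of f "fmult g h"] fmult_dlt_right)
  also have "\<dots> = (\<lambda>z. \<Sum>q\<in>supp g. \<Sum>r\<in>supp h. g q * h r * fmult f (dlt (pair_mult q r)) z)"
    unfolding fmult_def[of g h] by (simp only: lin_ext_sum_sum_dlt[OF assms])
  finally show ?thesis by (simp add: fmult_dlt_right lin_ext_def sum_distrib_left ac_simps)
qed

lemma fmult_assoc:
  assumes f: "f \<in> Formal" and g: "g \<in> Formal" and h: "h \<in> Formal"
  shows "fmult (fmult f g) h = fmult f (fmult g h)"
proof
  fix z
  have assoc: "pair_mult (pair_mult p q) r = pair_mult p (pair_mult q r)"
    if "p \<in> supp f" "q \<in> supp g" "r \<in> supp h" for p q r
    by (rule pair_mult_assoc) (use that Formal_supp[OF f] Formal_supp[OF g] Formal_supp[OF h] in auto)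
  have "fmult (fmult f g) h z =
      (\<Sum>p\<in>supp f. \<Sum>q\<in>supp g. \<Sum>r\<in>supp h. f p * g q * h r * dlt (pair_mult (pair_mult p q) r) z)"
    using f g by (simp only: fmult_fmult_left Formal_finite)
  also have "\<dots> =
      (\<Sum>p\<in>supp f. \<Sum>q\<in>supp g. \<Sum>r\<in>supp h. f p * g q * h r * dlt (pair_mult p (pair_mult q r)) z)"
    by (intro sum.cong refl) (simp only: assoc)
  also have "\<dots> = fmult f (fmult g h) z"
    unfolding fmult_fmult_right[OF Formal_finite[OF g] Formal_finite[OF h]] by (rule sum_rotate3[symmetric])
  finally show "fmult (fmult f g) h z = fmult f (fmult g h) z" .
qed

lemma lin_ext_unit_rep: "lin_ext H unit_rep = (\<lambda>z. \<Sum>i<length rs. H (rs ! i, ss ! i) z)"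
  unfolding unit_rep_def by (subst lin_ext_sum) auto

lemma fmult_unit_rep_left:
  assumes g: "g \<in> Formal" shows "eqv (fmult unit_rep g) g"
proof -
  have "fmult unit_rep g = lin_ext (\<lambda>q. fmult unit_rep (dlt q)) g"
    by (simp only: fmult_lin_ext_right[of unit_rep g] fmult_dlt_right)
  also have "eqv \<dots> (lin_ext dlt g)"
  proof (rule lin_ext_eqv[OF Formal_finite[OF g]])
    fix q assume "q \<in> supp g"
    then have q: "fst q \<in> carrier R" "snd q \<in> carrier R" using g Formal_supp by auto
    have "dlt (fst q, snd q) = dlt (\<Oplus>i\<in>{..<length rs}. rs ! i \<otimes> E (ss ! i \<otimes> fst q), snd q)"
      using quasi_basis_right q by simp
    also have "eqv \<dots> (\<lambda>z. \<Sum>i<length rs. dlt (rs ! i \<otimes> E (ss ! i \<otimes> fst q), snd q) z)"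
      by (rule eqv_dlt_finsum_left) (use q in auto)
    also have "\<dots> = fmult unit_rep (dlt q)"
      by (simp add: fmult_dlt_right lin_ext_unit_rep)
    finally show "eqv (fmult unit_rep (dlt q)) (dlt q)" by (simp add: eqv_sym)
  qed
  finally show ?thesis using lin_ext_dlt_self[OF Formal_finite[OF g]] by simp
qed

lemma fmult_unit_rep_right:
  assumes g: "g \<in> Formal" shows "eqv (fmult g unit_rep) g"
proof -
  have "fmult g unit_rep = lin_ext (\<lambda>p. fmult (dlt p) unit_rep) g"
    by (simp only: fmult_lin_ext_left[of g unit_rep] fmult_dlt_left)
  also have "eqv \<dots> (lin_ext dlt g)"
  proof (rule lin_ext_eqv[OF Formal_finite[OF g]])
    fix p assume "p \<in> supp g"
    then have p: "fst p \<in> carrier R" "snd p \<in> carrier R" using g Formal_supp by auto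
    have "fmult (dlt p) unit_rep = (\<lambda>z. \<Sum>i<length rs. dlt (fst p \<otimes> E (snd p \<otimes> rs ! i), ss ! i) z)"
      by (simp add: fmult_dlt_left lin_ext_unit_rep)
    also have "eqv \<dots> (\<lambda>z. \<Sum>i<length rs. dlt (fst p, E (snd p \<otimes> rs ! i) \<otimes> ss ! i) z)"
      by (rule eqv_sum) (use p in \<open>auto intro: eqv_dlt_balanced\<close>)
    also have "eqv \<dots> (dlt (fst p, \<Oplus>i\<in>{..<length rs}. E (snd p \<otimes> rs ! i) \<otimes> ss ! i))"
      by (rule eqv_sym, rule eqv_dlt_finsum_right) (use p in auto)
    also have "\<dots> = dlt p"
      using quasi_basis_left p by simp
    finally show "eqv (fmult (dlt p) unit_rep) (dlt p)" .
  qed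
  finally show ?thesis using lin_ext_dlt_self[OF Formal_finite[OF g]] by simp
qed

lemma abelian_group_R1: "abelian_group R1"
proof (rule abelian_groupI)
  fix x y assume "x \<in> carrier R1" "y \<in> carrier R1"
  then show "x \<oplus>\<^bsub>R1\<^esub> y \<in> carrier R1"
    by (auto elim!: R1E simp: add_cls Formal_add)
next
  show "\<zero>\<^bsub>R1\<^esub> \<in> carrier R1" by (simp add: zero_R1_cls)
next
  fix x y z assume "x \<in> carrier R1" "y \<in> carrier R1" "z \<in> carrier R1"
  then show "x \<oplus>\<^bsub>R1\<^esub> y \<oplus>\<^bsub>R1\<^esub> z = x \<oplus>\<^bsub>R1\<^esub> (y \<oplus>\<^bsub>R1\<^esub> z)"
    by (auto elim!: R1E simp: add_cls Formal_add add.assoc)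
next
  fix x y assume "x \<in> carrier R1" "y \<in> carrier R1"
  then show "x \<oplus>\<^bsub>R1\<^esub> y = y \<oplus>\<^bsub>R1\<^esub> x"
    by (auto elim!: R1E simp: add_cls add.commute)
next
  fix x assume "x \<in> carrier R1"
  then show "\<zero>\<^bsub>R1\<^esub> \<oplus>\<^bsub>R1\<^esub> x = x"
    by (auto elim!: R1E simp: add_cls zero_R1_cls)
next
  fix x assume "x \<in> carrier R1"
  then obtain f where f: "f \<in> Formal" "x = cls f" by (rule R1E)
  have m: "(\<lambda>p. - f p) \<in> Formal" using Formal_smult[OF f(1), of "-1"] by simp
  have "cls (\<lambda>p. - f p) \<oplus>\<^bsub>R1\<^esub> x = \<zero>\<^bsub>R1\<^esub>" using f m by (simp add: add_cls zero_R1_cls)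
  then show "\<exists>y\<in>carrier R1. y \<oplus>\<^bsub>R1\<^esub> x = \<zero>\<^bsub>R1\<^esub>" using m by (intro bexI[of _ "cls (\<lambda>p. - f p)"]) auto
qed

lemma monoid_R1: "monoid R1"
proof (rule monoidI)
  fix x y assume "x \<in> carrier R1" "y \<in> carrier R1"
  then show "x \<otimes>\<^bsub>R1\<^esub> y \<in> carrier R1"
    by (auto elim!: R1E simp: mult_cls fmult_Formal)
next
  show "\<one>\<^bsub>R1\<^esub> \<in> carrier R1" by (simp add: one_R1_cls unit_rep_Formal)
next
  fix x y z assume "x \<in> carrier R1" "y \<in> carrier R1" "z \<in> carrier R1"
  then show "x \<otimes>\<^bsub>R1\<^esub> y \<otimes>\<^bsub>R1\<^esub> z = x \<otimes>\<^bsub>R1\<^esub> (y \<otimes>\<^bsub>R1\<^esub> z)"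
    by (auto elim!: R1E simp: mult_cls fmult_Formal fmult_assoc)
next
  fix x assume "x \<in> carrier R1"
  then obtain f where f: "f \<in> Formal" "x = cls f" by (rule R1E)
  show "\<one>\<^bsub>R1\<^esub> \<otimes>\<^bsub>R1\<^esub> x = x"
    using f by (simp add: mult_cls one_R1_cls unit_rep_Formal) (intro cls_eqI fmult_Formal unit_rep_Formal fmult_unit_rep_left f(1))
next
  fix x assume "x \<in> carrier R1"
  then obtain f where f: "f \<in> Formal" "x = cls f" by (rule R1E)
  show "x \<otimes>\<^bsub>R1\<^esub> \<one>\<^bsub>R1\<^esub> = x"
    using f by (simp add: mult_cls one_R1_cls unit_rep_Formal) (intro cls_eqI fmult_Formal unit_rep_Formal fmult_unit_rep_right f(1))
qed

lemma ring_R1: "ring R1"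
proof (rule ringI[OF abelian_group_R1 monoid_R1])
  fix x y z assume "x \<in> carrier R1" "y \<in> carrier R1" "z \<in> carrier R1"
  then show "(x \<oplus>\<^bsub>R1\<^esub> y) \<otimes>\<^bsub>R1\<^esub> z = x \<otimes>\<^bsub>R1\<^esub> z \<oplus>\<^bsub>R1\<^esub> y \<otimes>\<^bsub>R1\<^esub> z"
    by (auto elim!: R1E simp: mult_cls add_cls Formal_add fmult_Formal fmult_lin_comb_left[of _ _ 1 1, simplified] Formal_finite)
next
  fix x y z assume "x \<in> carrier R1" "y \<in> carrier R1" "z \<in> carrier R1"
  then show "z \<otimes>\<^bsub>R1\<^esub> (x \<oplus>\<^bsub>R1\<^esub> y) = z \<otimes>\<^bsub>R1\<^esub> x \<oplus>\<^bsub>R1\<^esub> z \<otimes>\<^bsub>R1\<^esub> y"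
    by (auto elim!: R1E simp: mult_cls add_cls Formal_add fmult_Formal fmult_lin_comb_right[of _ _ _ 1 1, simplified] Formal_finite)
qed

lemma fmult_smult_left: "f \<in> Formal \<Longrightarrow> fmult (\<lambda>p. c * f p) g = (\<lambda>z. c * fmult f g z)"
  using fmult_lin_comb_left[of f f c 0 g] Formal_finite by simp
lemma fmult_smult_right: "g \<in> Formal \<Longrightarrow> fmult f (\<lambda>p. c * g p) = (\<lambda>z. c * fmult f g z)"
  using fmult_lin_comb_right[of g g f c 0] Formal_finite by simp

lemma kalg_R1: "kalg R1"
  unfolding kalg_def
proof (intro conjI allI impI)
  show "ring R1" by (rule ring_R1)
next
  fix c a assume "a \<in> carrier R1"
  then show "c \<odot>\<^bsub>R1\<^esub> a \<in> carrier R1" by (auto elim!: R1E simp: smult_cls Formal_smult)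
next
  fix c a b assume "a \<in> carrier R1" "b \<in> carrier R1"
  then show "c \<odot>\<^bsub>R1\<^esub> (a \<oplus>\<^bsub>R1\<^esub> b) = c \<odot>\<^bsub>R1\<^esub> a \<oplus>\<^bsub>R1\<^esub> c \<odot>\<^bsub>R1\<^esub> b"
    by (auto elim!: R1E simp: smult_cls add_cls Formal_smult Formal_add distrib_left)
next
  fix c d a assume "a \<in> carrier R1"
  then show "(c + d) \<odot>\<^bsub>R1\<^esub> a = c \<odot>\<^bsub>R1\<^esub> a \<oplus>\<^bsub>R1\<^esub> d \<odot>\<^bsub>R1\<^esub> a"
    by (auto elim!: R1E simp: smult_cls add_cls Formal_smult distrib_right)
next
  fix c d a assume "a \<in> carrier R1"
  then show "(c * d) \<odot>\<^bsub>R1\<^esub> a = c \<odot>\<^bsub>R1\<^esub> (d \<odot>\<^bsub>R1\<^esub> a)"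
    by (auto elim!: R1E simp: smult_cls Formal_smult mult.assoc)
next
  fix a assume "a \<in> carrier R1"
  then show "1 \<odot>\<^bsub>R1\<^esub> a = a"
    by (auto elim!: R1E simp: smult_cls)
next
  fix c a b assume "a \<in> carrier R1" "b \<in> carrier R1"
  then show "(c \<odot>\<^bsub>R1\<^esub> a) \<otimes>\<^bsub>R1\<^esub> b = c \<odot>\<^bsub>R1\<^esub> (a \<otimes>\<^bsub>R1\<^esub> b)"
    by (auto elim!: R1E simp: smult_cls mult_cls Formal_smult fmult_Formal fmult_smult_left)
next
  fix c a b assume "a \<in> carrier R1" "b \<in> carrier R1"
  then show "a \<otimes>\<^bsub>R1\<^esub> (c \<odot>\<^bsub>R1\<^esub> b) = c \<odot>\<^bsub>R1\<^esub> (a \<otimes>\<^bsub>R1\<^esub> b)"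
    by (auto elim!: R1E simp: smult_cls mult_cls Formal_smult fmult_Formal fmult_smult_right)
qed

end

sublocale strongly_separable \<subseteq> R1: k_algebra "bc R S E rs ss" by (rule k_algebra.intro, rule kalg_R1)

context strongly_separable begin

section \<open>The basic construction is strongly separable\<close>

definition tensor :: "'a \<Rightarrow> 'a \<Rightarrow> ('k, 'a) t1" where
  "tensor u v = cls (dlt (u, v))"
abbreviation incl :: "'a \<Rightarrow> ('k, 'a) t1" where "incl \<equiv> bc_incl R S rs ss"
abbreviation e :: "('k, 'a) t1" where "e \<equiv> bc_jones R S"
abbreviation ER :: "('k, 'a) t1 \<Rightarrow> 'a" where "ER \<equiv> bc_E R lam"

lemma e_tensor: "e = tensor \<one> \<one>" by (simp add: bc_jones_def tensor_def)

lemma tensor_closed[simp]: "u \<in> carrier R \<Longrightarrow> v \<in> carrier R \<Longrightarrow> tensor u v \<in> carrier R1"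
  by (simp add: tensor_def)

lemma tensor_add_left: "a \<in> carrier R \<Longrightarrow> b \<in> carrier R \<Longrightarrow> c \<in> carrier R \<Longrightarrow>
  tensor (a \<oplus> b) c = tensor a c \<oplus>\<^bsub>R1\<^esub> tensor b c"
  unfolding tensor_def by (simp add: add_cls) (intro cls_eqI Formal_add Formal_dlt eqv_dlt_add_left, auto)
lemma tensor_add_right: "a \<in> carrier R \<Longrightarrow> b \<in> carrier R \<Longrightarrow> c \<in> carrier R \<Longrightarrow>
  tensor a (b \<oplus> c) = tensor a b \<oplus>\<^bsub>R1\<^esub> tensor a c"
  unfolding tensor_def by (simp add: add_cls) (intro cls_eqI Formal_add Formal_dlt eqv_dlt_add_right, auto)
lemma tensor_smult_left: "a \<in> carrier R \<Longrightarrow> b \<in> carrier R \<Longrightarrow> tensor (t \<odot> a) b = t \<odot>\<^bsub>R1\<^esub> tensor a b"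
  unfolding tensor_def by (simp add: smult_cls) (intro cls_eqI Formal_smult Formal_dlt eqv_dlt_smult_left, auto)
lemma tensor_smult_right: "a \<in> carrier R \<Longrightarrow> b \<in> carrier R \<Longrightarrow> tensor a (t \<odot> b) = t \<odot>\<^bsub>R1\<^esub> tensor a b"
  unfolding tensor_def by (simp add: smult_cls) (intro cls_eqI Formal_smult Formal_dlt eqv_dlt_smult_right, auto)
lemma tensor_balanced: "a \<in> carrier R \<Longrightarrow> b \<in> carrier R \<Longrightarrow> s \<in> S \<Longrightarrow> tensor (a \<otimes> s) b = tensor a (s \<otimes> b)"
  unfolding tensor_def by (intro cls_eqI Formal_dlt eqv_dlt_balanced) auto
lemma tensor_zero_left: "b \<in> carrier R \<Longrightarrow> tensor \<zero> b = \<zero>\<^bsub>R1\<^esub>"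
  using tensor_smult_left[of \<zero> b 0] by simp
lemma tensor_zero_right: "a \<in> carrier R \<Longrightarrow> tensor a \<zero> = \<zero>\<^bsub>R1\<^esub>"
  using tensor_smult_right[of a \<zero> 0] by simp
lemma tensor_mult: "u \<in> carrier R \<Longrightarrow> v \<in> carrier R \<Longrightarrow> u' \<in> carrier R \<Longrightarrow> v' \<in> carrier R \<Longrightarrow>
  tensor u v \<otimes>\<^bsub>R1\<^esub> tensor u' v' = tensor (u \<otimes> E (v \<otimes> u')) v'"
  unfolding tensor_def by (simp add: mult_cls fmult_dlt)

lemma tensor_finsum_left: "finite I \<Longrightarrow> (\<And>i. i \<in> I \<Longrightarrow> a i \<in> carrier R) \<Longrightarrow> b \<in> carrier R \<Longrightarrow>
  tensor (\<Oplus>i\<in>I. a i) b = (\<Oplus>\<^bsub>R1\<^esub>i\<in>I. tensor (a i) b)"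
proof (induction I rule: finite_induct)
  case empty then show ?case by (simp add: tensor_zero_left)
next
  case (insert x I)
  then have "a \<in> I \<rightarrow> carrier R" "a x \<in> carrier R" by auto
  with insert show ?case
    by (simp add: finsum_insert R1.finsum_insert finsum_closed tensor_add_left Pi_def)
qed

lemma tensor_finsum_right: "finite I \<Longrightarrow> (\<And>i. i \<in> I \<Longrightarrow> b i \<in> carrier R) \<Longrightarrow> a \<in> carrier R \<Longrightarrow>
  tensor a (\<Oplus>i\<in>I. b i) = (\<Oplus>\<^bsub>R1\<^esub>i\<in>I. tensor a (b i))"
proof (induction I rule: finite_induct)
  case empty then show ?case by (simp add: tensor_zero_right)
next
  case (insert x I)
  then have "b \<in> I \<rightarrow> carrier R" "b x \<in> carrier R" by auto
  with insert show ?case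
    by (simp add: finsum_insert R1.finsum_insert finsum_closed tensor_add_right Pi_def)
qed

lemma cls_sum: "finite I \<Longrightarrow> (\<And>i. i \<in> I \<Longrightarrow> g i \<in> Formal) \<Longrightarrow>
  cls (\<lambda>p. \<Sum>i\<in>I. g i p) = (\<Oplus>\<^bsub>R1\<^esub>i\<in>I. cls (g i))"
proof (induction I rule: finite_induct)
  case empty then show ?case by (simp add: zero_R1_cls)
next
  case (insert x I)
  then have "(\<lambda>p. \<Sum>i\<in>I. g i p) \<in> Formal" by (intro Formal_sum) auto
  with insert show ?case
    using add_cls[of "g x" "\<lambda>p. \<Sum>i\<in>I. g i p"] by (simp add: R1.finsum_insert Pi_def)
qed

lemma incl_tensor_sum: "a \<in> carrier R \<Longrightarrow> incl a = (\<Oplus>\<^bsub>R1\<^esub>i\<in>{..<length rs}. tensor (a \<otimes> rs ! i) (ss ! i))"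
  unfolding bc_incl_def tensor_def by (rule cls_sum) auto

lemma one_R1_tensor_sum: "\<one>\<^bsub>R1\<^esub> = (\<Oplus>\<^bsub>R1\<^esub>i\<in>{..<length rs}. tensor (rs ! i) (ss ! i))"
  unfolding one_R1_cls unit_rep_def tensor_def by (rule cls_sum) auto

lemma incl_closed[simp]: "a \<in> carrier R \<Longrightarrow> incl a \<in> carrier R1"
  by (simp add: incl_tensor_sum R1.finsum_closed Pi_def)

lemma incl_mult_tensor: "a \<in> carrier R \<Longrightarrow> u \<in> carrier R \<Longrightarrow> v \<in> carrier R \<Longrightarrow>
  incl a \<otimes>\<^bsub>R1\<^esub> tensor u v = tensor (a \<otimes> u) v"
proof -
  assume a: "a \<in> carrier R" and u: "u \<in> carrier R" and v: "v \<in> carrier R"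
  have "incl a \<otimes>\<^bsub>R1\<^esub> tensor u v = (\<Oplus>\<^bsub>R1\<^esub>i\<in>{..<length rs}. tensor (a \<otimes> rs ! i) (ss ! i) \<otimes>\<^bsub>R1\<^esub> tensor u v)"
    using a u v by (simp add: incl_tensor_sum R1.finsum_ldistr Pi_def)
  also have "\<dots> = (\<Oplus>\<^bsub>R1\<^esub>i\<in>{..<length rs}. tensor (a \<otimes> (rs ! i \<otimes> E (ss ! i \<otimes> u))) v)"
    using a u v by (intro R1.finsum_cong') (auto simp: tensor_mult m_assoc)
  also have "\<dots> = tensor (\<Oplus>i\<in>{..<length rs}. a \<otimes> (rs ! i \<otimes> E (ss ! i \<otimes> u))) v"
    using a u v by (intro tensor_finsum_left[symmetric]) auto
  also have "(\<Oplus>i\<in>{..<length rs}. a \<otimes> (rs ! i \<otimes> E (ss ! i \<otimes> u))) = a \<otimes> u"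
    using a u quasi_basis_right by (simp add: finsum_rdistr[symmetric] Pi_def)
  finally show ?thesis .
qed

lemma tensor_mult_incl: "b \<in> carrier R \<Longrightarrow> u \<in> carrier R \<Longrightarrow> v \<in> carrier R \<Longrightarrow>
  tensor u v \<otimes>\<^bsub>R1\<^esub> incl b = tensor u (v \<otimes> b)"
proof -
  assume b: "b \<in> carrier R" and u: "u \<in> carrier R" and v: "v \<in> carrier R"
  have "tensor u v \<otimes>\<^bsub>R1\<^esub> incl b = (\<Oplus>\<^bsub>R1\<^esub>i\<in>{..<length rs}. tensor u v \<otimes>\<^bsub>R1\<^esub> tensor (b \<otimes> rs ! i) (ss ! i))"
    using b u v by (simp add: incl_tensor_sum R1.finsum_rdistr Pi_def)
  also have "\<dots> = (\<Oplus>\<^bsub>R1\<^esub>i\<in>{..<length rs}. tensor u (E (v \<otimes> b \<otimes> rs ! i) \<otimes> ss ! i))"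
    using b u v by (intro R1.finsum_cong') (auto simp: tensor_mult m_assoc tensor_balanced)
  also have "\<dots> = tensor u (\<Oplus>i\<in>{..<length rs}. E (v \<otimes> b \<otimes> rs ! i) \<otimes> ss ! i)"
    using b u v by (intro tensor_finsum_right[symmetric]) auto
  also have "(\<Oplus>i\<in>{..<length rs}. E (v \<otimes> b \<otimes> rs ! i) \<otimes> ss ! i) = v \<otimes> b"
    using b v quasi_basis_left by simp
  finally show ?thesis .
qed

lemma tensor_eq_incl_e_incl: "u \<in> carrier R \<Longrightarrow> v \<in> carrier R \<Longrightarrow> tensor u v = incl u \<otimes>\<^bsub>R1\<^esub> e \<otimes>\<^bsub>R1\<^esub> incl v"
  by (simp add: e_tensor incl_mult_tensor tensor_mult_incl)

lemma e_closed[simp]: "e \<in> carrier R1" by (simp add: e_tensor)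

lemma R1_induct[consumes 1, case_names zero add smult tensor]:
  assumes X: "X \<in> carrier R1"
    and P_zero: "P \<zero>\<^bsub>R1\<^esub>"
    and P_add: "\<And>x y. x \<in> carrier R1 \<Longrightarrow> y \<in> carrier R1 \<Longrightarrow> P x \<Longrightarrow> P y \<Longrightarrow> P (x \<oplus>\<^bsub>R1\<^esub> y)"
    and P_smult: "\<And>c x. x \<in> carrier R1 \<Longrightarrow> P x \<Longrightarrow> P (c \<odot>\<^bsub>R1\<^esub> x)"
    and P_tensor: "\<And>u v. u \<in> carrier R \<Longrightarrow> v \<in> carrier R \<Longrightarrow> P (tensor u v)"
  shows "P X"
proof -
  obtain f where f: "f \<in> Formal" "X = cls f" using X by (rule R1E)
  have gen: "P (cls (\<lambda>z. \<Sum>p\<in>A. c p * dlt p z))" if "finite A" "A \<subseteq> carrier R \<times> carrier R" for A c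
    using that
  proof (induction A rule: finite_induct)
    case empty then show ?case using P_zero by (simp add: zero_R1_cls)
  next
    case (insert a A)
    have a: "fst a \<in> carrier R" "snd a \<in> carrier R" using insert by auto
    have da: "dlt a \<in> Formal" using a Formal_dlt[of "fst a" "snd a"] by simp
    have rest: "(\<lambda>z. \<Sum>p\<in>A. c p * dlt p z) \<in> Formal"
      using insert by (intro Formal_sum Formal_smult) (auto intro!: Formal_dlt)
    have "cls (\<lambda>z. \<Sum>p\<in>insert a A. c p * dlt p z) = cls (\<lambda>z. c a * dlt a z + (\<Sum>p\<in>A. c p * dlt p z))"
      using insert by simp
    also have "\<dots> = c a \<odot>\<^bsub>R1\<^esub> tensor (fst a) (snd a) \<oplus>\<^bsub>R1\<^esub> cls (\<lambda>z. \<Sum>p\<in>A. c p * dlt p z)"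
      using da rest by (simp add: tensor_def add_cls smult_cls Formal_smult)
    moreover have "P (c a \<odot>\<^bsub>R1\<^esub> tensor (fst a) (snd a) \<oplus>\<^bsub>R1\<^esub> cls (\<lambda>z. \<Sum>p\<in>A. c p * dlt p z))"
      using insert a rest by (intro P_add P_smult P_tensor) auto
    ultimately show ?case by simp
  qed
  have "f = (\<lambda>z. \<Sum>p\<in>supp f. f p * dlt p z)"
    using lin_ext_dlt_self[OF Formal_finite[OF f(1)]] by (simp add: lin_ext_def)
  then have "X = cls (\<lambda>z. \<Sum>p\<in>supp f. f p * dlt p z)" using f by simp
  then show ?thesis using gen[of "supp f" f] f Formal_iff by auto
qed

lemma incl_mult: "a \<in> carrier R \<Longrightarrow> b \<in> carrier R \<Longrightarrow> incl a \<otimes>\<^bsub>R1\<^esub> incl b = incl (a \<otimes> b)"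
proof -
  assume a: "a \<in> carrier R" and b: "b \<in> carrier R"
  have "incl a \<otimes>\<^bsub>R1\<^esub> incl b = (\<Oplus>\<^bsub>R1\<^esub>i\<in>{..<length rs}. incl a \<otimes>\<^bsub>R1\<^esub> tensor (b \<otimes> rs ! i) (ss ! i))"
    using a b by (simp add: incl_tensor_sum[of b] R1.finsum_rdistr Pi_def)
  also have "\<dots> = (\<Oplus>\<^bsub>R1\<^esub>i\<in>{..<length rs}. tensor (a \<otimes> b \<otimes> rs ! i) (ss ! i))"
    using a b by (intro R1.finsum_cong') (auto simp: incl_mult_tensor m_assoc)
  also have "\<dots> = incl (a \<otimes> b)" using a b by (simp add: incl_tensor_sum)
  finally show ?thesis .
qed

lemma incl_add: "a \<in> carrier R \<Longrightarrow> b \<in> carrier R \<Longrightarrow> incl (a \<oplus> b) = incl a \<oplus>\<^bsub>R1\<^esub> incl b"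
proof -
  assume a: "a \<in> carrier R" and b: "b \<in> carrier R"
  have "incl (a \<oplus> b) = (\<Oplus>\<^bsub>R1\<^esub>i\<in>{..<length rs}. tensor ((a \<oplus> b) \<otimes> rs ! i) (ss ! i))"
    using a b by (simp add: incl_tensor_sum)
  also have "\<dots> = (\<Oplus>\<^bsub>R1\<^esub>i\<in>{..<length rs}. tensor (a \<otimes> rs ! i) (ss ! i) \<oplus>\<^bsub>R1\<^esub> tensor (b \<otimes> rs ! i) (ss ! i))"
    using a b by (intro R1.finsum_cong'[OF refl]) (auto simp: l_distr tensor_add_left)
  also have "\<dots> = incl a \<oplus>\<^bsub>R1\<^esub> incl b"
    using a b by (simp add: incl_tensor_sum R1.finsum_addf Pi_def)
  finally show ?thesis .
qed

lemma incl_smult: "a \<in> carrier R \<Longrightarrow> incl (t \<odot> a) = t \<odot>\<^bsub>R1\<^esub> incl a"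
proof -
  assume a: "a \<in> carrier R"
  have "incl (t \<odot> a) = (\<Oplus>\<^bsub>R1\<^esub>i\<in>{..<length rs}. tensor ((t \<odot> a) \<otimes> rs ! i) (ss ! i))"
    using a by (simp add: incl_tensor_sum)
  also have "\<dots> = (\<Oplus>\<^bsub>R1\<^esub>i\<in>{..<length rs}. t \<odot>\<^bsub>R1\<^esub> tensor (a \<otimes> rs ! i) (ss ! i))"
    using a by (intro R1.finsum_cong'[OF refl]) (auto simp: mult_smult_left tensor_smult_left)
  also have "\<dots> = t \<odot>\<^bsub>R1\<^esub> incl a"
    using a by (simp add: incl_tensor_sum R1.smult_finsum Pi_def)
  finally show ?thesis .
qed

lemma incl_one: "incl \<one> = \<one>\<^bsub>R1\<^esub>"
  unfolding incl_tensor_sum[OF one_closed] one_R1_tensor_sum by (intro R1.finsum_cong'[OF refl]) auto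

lemma incl_zero: "incl \<zero> = \<zero>\<^bsub>R1\<^esub>"
  using incl_smult[of \<zero> 0] by simp

lemma e_incl_comm: "s \<in> S \<Longrightarrow> e \<otimes>\<^bsub>R1\<^esub> incl s = incl s \<otimes>\<^bsub>R1\<^esub> e"
  using tensor_balanced[of \<one> \<one> s] by (simp add: e_tensor incl_mult_tensor tensor_mult_incl)

lemma e_incl_e: "a \<in> carrier R \<Longrightarrow> e \<otimes>\<^bsub>R1\<^esub> incl a \<otimes>\<^bsub>R1\<^esub> e = incl (E a) \<otimes>\<^bsub>R1\<^esub> e"
  by (simp add: e_tensor incl_mult_tensor tensor_mult_incl tensor_mult E_one)

definition fsum_mult :: "('a \<times> 'a \<Rightarrow> 'k) \<Rightarrow> 'a" where
  "fsum_mult f = (\<Oplus>p\<in>supp f. f p \<odot> (fst p \<otimes> snd p))"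

lemma fsum_mult_superset:
  assumes f: "f \<in> Formal" and A: "finite A" "supp f \<subseteq> A" "A \<subseteq> carrier R \<times> carrier R"
  shows "fsum_mult f = (\<Oplus>p\<in>A. f p \<odot> (fst p \<otimes> snd p))"
  unfolding fsum_mult_def
proof (rule add.finprod_mono_neutral_cong_left[OF A(1,2)])
  fix i assume "i \<in> A - supp f"
  then show "f i \<odot> (fst i \<otimes> snd i) = \<zero>" using A by (auto simp: supp_def)
next
  show "(\<lambda>p. f p \<odot> (fst p \<otimes> snd p)) \<in> A \<rightarrow> carrier R" using A by auto
qed simp

lemma fsum_mult_closed[simp]: "f \<in> Formal \<Longrightarrow> fsum_mult f \<in> carrier R"
  unfolding fsum_mult_def by (rule finsum_closed) (auto dest: Formal_supp)

lemma fsum_mult_lin_comb: assumes f: "f \<in> Formal" and g: "g \<in> Formal"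
  shows "fsum_mult (\<lambda>p. a * f p + b * g p) = a \<odot> fsum_mult f \<oplus> b \<odot> fsum_mult g"
proof -
  let ?A = "supp f \<union> supp g"
  have A: "finite ?A" "?A \<subseteq> carrier R \<times> carrier R" using f g Formal_iff by auto
  have h: "(\<lambda>p. a * f p + b * g p) \<in> Formal" using Formal_lin_comb[OF f g] .
  have "fsum_mult (\<lambda>p. a * f p + b * g p) = (\<Oplus>p\<in>?A. (a * f p + b * g p) \<odot> (fst p \<otimes> snd p))"
    by (rule fsum_mult_superset[OF h A(1) supp_lin_comb A(2)])
  also have "\<dots> = (\<Oplus>p\<in>?A. a \<odot> (f p \<odot> (fst p \<otimes> snd p)) \<oplus> b \<odot> (g p \<odot> (fst p \<otimes> snd p)))"
    using A by (intro finsum_cong') (auto simp: smult_l_distr smult_assoc1)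
  also have "\<dots> = (\<Oplus>p\<in>?A. a \<odot> (f p \<odot> (fst p \<otimes> snd p))) \<oplus> (\<Oplus>p\<in>?A. b \<odot> (g p \<odot> (fst p \<otimes> snd p)))"
    using A by (intro finsum_addf) auto
  also have "\<dots> = a \<odot> (\<Oplus>p\<in>?A. f p \<odot> (fst p \<otimes> snd p)) \<oplus> b \<odot> (\<Oplus>p\<in>?A. g p \<odot> (fst p \<otimes> snd p))"
    using A by (simp add: smult_finsum Pi_def subset_iff)
  also have "\<dots> = a \<odot> fsum_mult f \<oplus> b \<odot> fsum_mult g"
    using A f g by (simp add: fsum_mult_superset[of f ?A] fsum_mult_superset[of g ?A] Formal_iff)
  finally show ?thesis .
qed

lemma fsum_mult_diff: "f \<in> Formal \<Longrightarrow> g \<in> Formal \<Longrightarrow> fsum_mult (\<lambda>p. f p - g p) = fsum_mult f \<ominus> fsum_mult g"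
  using fsum_mult_lin_comb[of f g 1 "-1"] by (simp add: smult_l_minus minus_eq)
lemma fsum_mult_add: "f \<in> Formal \<Longrightarrow> g \<in> Formal \<Longrightarrow> fsum_mult (\<lambda>p. f p + g p) = fsum_mult f \<oplus> fsum_mult g"
  using fsum_mult_lin_comb[of f g 1 1] by simp
lemma fsum_mult_smult: "f \<in> Formal \<Longrightarrow> fsum_mult (\<lambda>p. c * f p) = c \<odot> fsum_mult f"
  using fsum_mult_lin_comb[of f f c 0] by simp

lemma fsum_mult_dlt: "a \<in> carrier R \<Longrightarrow> b \<in> carrier R \<Longrightarrow> fsum_mult (dlt (a, b)) = a \<otimes> b"
  by (simp add: fsum_mult_def dlt_def)

lemma fsum_mult_Rel: "f \<in> Rel \<Longrightarrow> fsum_mult f = \<zero>"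
proof (induction rule: trel.induct)
  case zero then show ?case by (simp add: fsum_mult_def supp_def)
next
  case (add f g) then show ?case by (simp add: fsum_mult_add Rel_Formal)
next
  case (smul f c) then show ?case by (simp add: fsum_mult_smult Rel_Formal)
next
  case (addl a b c)
  then have "fsum_mult (\<lambda>p. dlt (a \<oplus> b, c) p - dlt (a, c) p - dlt (b, c) p) = (a \<oplus> b) \<otimes> c \<ominus> a \<otimes> c \<ominus> b \<otimes> c"
    using fsum_mult_diff[of "\<lambda>p. dlt (a \<oplus> b, c) p - dlt (a, c) p" "dlt (b, c)"]
    by (simp add: fsum_mult_diff Formal_diff fsum_mult_dlt)
  also have "\<dots> = \<zero>" using addl by algebra
  finally show ?case .
next
  case (addr a b c)
  then have "fsum_mult (\<lambda>p. dlt (a, b \<oplus> c) p - dlt (a, b) p - dlt (a, c) p) = a \<otimes> (b \<oplus> c) \<ominus> a \<otimes> b \<ominus> a \<otimes> c"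
    using fsum_mult_diff[of "\<lambda>p. dlt (a, b \<oplus> c) p - dlt (a, b) p" "dlt (a, c)"]
    by (simp add: fsum_mult_diff Formal_diff fsum_mult_dlt)
  also have "\<dots> = \<zero>" using addr by algebra
  finally show ?case .
next
  case (bal a b s)
  then show ?case using fsum_mult_diff[of "dlt (a \<otimes> s, b)" "dlt (a, s \<otimes> b)"]
    by (simp add: fsum_mult_dlt m_assoc r_neg minus_eq)
next
  case (scl a b t)
  then show ?case using fsum_mult_diff[of "dlt (t \<odot> a, b)" "\<lambda>p. t * dlt (a, b) p"]
    by (simp add: Formal_smult fsum_mult_smult fsum_mult_dlt mult_smult_left r_neg minus_eq)
next
  case (scr a b t)
  then show ?case using fsum_mult_diff[of "dlt (a, t \<odot> b)" "\<lambda>p. t * dlt (a, b) p"]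
    by (simp add: Formal_smult fsum_mult_smult fsum_mult_dlt mult_smult_right r_neg minus_eq)
qed

lemma fsum_mult_eqv: "f \<in> Formal \<Longrightarrow> g \<in> Formal \<Longrightarrow> eqv f g \<Longrightarrow> fsum_mult f = fsum_mult g"
proof -
  assume f: "f \<in> Formal" and g: "g \<in> Formal" and e: "eqv f g"
  have "fsum_mult f \<ominus> fsum_mult g = \<zero>" using e f g by (simp add: eqv_def fsum_mult_diff[symmetric] fsum_mult_Rel)
  moreover have "fsum_mult f = fsum_mult f \<ominus> fsum_mult g \<oplus> fsum_mult g" using f g fsum_mult_closed by algebra
  ultimately show ?thesis using f g by simp
qed

lemma ER_cls: "f \<in> Formal \<Longrightarrow> ER (cls f) = lam \<odot> fsum_mult f"
  using trep_cls[of f] fsum_mult_eqv[of "trep (cls f)" f]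
  by (simp add: bc_E_def Let_def fsum_mult_def)

lemma ER_tensor: "u \<in> carrier R \<Longrightarrow> v \<in> carrier R \<Longrightarrow> ER (tensor u v) = lam \<odot> (u \<otimes> v)"
  by (simp add: tensor_def ER_cls fsum_mult_dlt)

lemma ER_closed[simp]: "X \<in> carrier R1 \<Longrightarrow> ER X \<in> carrier R"
  by (auto elim!: R1E simp: ER_cls)

lemma ER_add: "X \<in> carrier R1 \<Longrightarrow> Y \<in> carrier R1 \<Longrightarrow> ER (X \<oplus>\<^bsub>R1\<^esub> Y) = ER X \<oplus> ER Y"
  by (auto elim!: R1E simp: ER_cls add_cls Formal_add fsum_mult_add smult_r_distr)

lemma ER_smult: "X \<in> carrier R1 \<Longrightarrow> ER (c \<odot>\<^bsub>R1\<^esub> X) = c \<odot> ER X"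
  by (auto elim!: R1E simp: ER_cls smult_cls Formal_smult fsum_mult_smult smult_assoc1[symmetric] mult.commute)

lemma ER_zero: "ER \<zero>\<^bsub>R1\<^esub> = \<zero>"
  by (simp add: zero_R1_cls ER_cls fsum_mult_def supp_def)

lemma ER_finsum: "finite I \<Longrightarrow> (\<And>i. i \<in> I \<Longrightarrow> X i \<in> carrier R1) \<Longrightarrow>
  ER (\<Oplus>\<^bsub>R1\<^esub>i\<in>I. X i) = (\<Oplus>i\<in>I. ER (X i))"
proof (induction I rule: finite_induct)
  case empty then show ?case by (simp add: ER_zero)
next
  case (insert x I)
  then show ?case by (simp add: R1.finsum_insert finsum_insert ER_add R1.finsum_closed Pi_def)
qed

lemma ER_incl: "a \<in> carrier R \<Longrightarrow> ER (incl a) = a"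
proof -
  assume a: "a \<in> carrier R"
  have "ER (incl a) = (\<Oplus>i\<in>{..<length rs}. ER (tensor (a \<otimes> rs ! i) (ss ! i)))"
    using a by (simp add: incl_tensor_sum) (rule ER_finsum, auto)
  also have "\<dots> = (\<Oplus>i\<in>{..<length rs}. lam \<odot> (a \<otimes> (rs ! i \<otimes> ss ! i)))"
    using a by (intro finsum_cong'[OF refl]) (auto simp: ER_tensor m_assoc)
  also have "\<dots> = lam \<odot> (a \<otimes> (\<Oplus>i\<in>{..<length rs}. rs ! i \<otimes> ss ! i))"
    using a by (simp add: smult_finsum finsum_rdistr Pi_def)
  also have "\<dots> = a" using a lam_nonzero by (simp add: quasi_basis_trace mult_smult_right smult_assoc1[symmetric])
  finally show ?thesis .
qed

lemma ER_one: "ER \<one>\<^bsub>R1\<^esub> = \<one>"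
  using ER_incl[of \<one>] by (simp add: incl_one)

lemma incl_inj: "a \<in> carrier R \<Longrightarrow> b \<in> carrier R \<Longrightarrow> incl a = incl b \<Longrightarrow> a = b"
  by (metis ER_incl)

lemma ER_incl_mult:
  assumes a: "a \<in> carrier R" and X: "X \<in> carrier R1"
  shows "ER (incl a \<otimes>\<^bsub>R1\<^esub> X) = a \<otimes> ER X"
  using X
proof (induction X rule: R1_induct)
  case zero then show ?case using a by (simp add: ER_zero)
next
  case (add x y) then show ?case using a by (simp add: R1.r_distr ER_add r_distr)
next
  case (smult c x) then show ?case using a by (simp add: R1.mult_smult_right ER_smult mult_smult_right)
next
  case (tensor u v) then show ?case using a by (simp add: incl_mult_tensor ER_tensor mult_smult_right m_assoc)
qed

lemma ER_mult_incl:
  assumes b: "b \<in> carrier R" and X: "X \<in> carrier R1"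
  shows "ER (X \<otimes>\<^bsub>R1\<^esub> incl b) = ER X \<otimes> b"
  using X
proof (induction X rule: R1_induct)
  case zero then show ?case using b by (simp add: ER_zero)
next
  case (add x y) then show ?case using b by (simp add: R1.l_distr ER_add l_distr)
next
  case (smult c x) then show ?case using b by (simp add: R1.mult_smult_left ER_smult mult_smult_left)
next
  case (tensor u v) then show ?case using b by (simp add: tensor_mult_incl ER_tensor mult_smult_left m_assoc)
qed

lemma ER_incl_mult_e: "a \<in> carrier R \<Longrightarrow> ER (incl a \<otimes>\<^bsub>R1\<^esub> e) = lam \<odot> a"
  by (simp add: e_tensor incl_mult_tensor ER_tensor)

abbreviation rs1 :: "('k, 'a) t1 list" where "rs1 \<equiv> bc_left R S lam rs"
abbreviation ss1 :: "('k, 'a) t1 list" where "ss1 \<equiv> bc_right R S ss"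

lemma rs1_length: "length rs1 = length rs" by (simp add: bc_left_def)
lemma ss1_length: "length ss1 = length rs" by (simp add: bc_right_def length_eq)
lemma rs1_nth: "i < length rs \<Longrightarrow> rs1 ! i = tensor (inverse lam \<odot> rs ! i) \<one>"
  by (simp add: bc_left_def tensor_def)
lemma ss1_nth: "i < length rs \<Longrightarrow> ss1 ! i = tensor \<one> (ss ! i)"
  using length_eq by (simp add: bc_right_def tensor_def)


lemma rs1_mult_ss1: "i < length rs \<Longrightarrow> rs1 ! i \<otimes>\<^bsub>R1\<^esub> ss1 ! i = inverse lam \<odot>\<^bsub>R1\<^esub> tensor (rs ! i) (ss ! i)"
proof -
  assume i: "i < length rs"
  have "rs1 ! i \<otimes>\<^bsub>R1\<^esub> ss1 ! i = tensor (inverse lam \<odot> rs ! i \<otimes> E (\<one> \<otimes> \<one>)) (ss ! i)"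
    using i by (simp add: rs1_nth ss1_nth tensor_mult del: l_one)
  also have "\<dots> = tensor (inverse lam \<odot> rs ! i) (ss ! i)" using i by (simp add: E_one)
  also have "\<dots> = inverse lam \<odot>\<^bsub>R1\<^esub> tensor (rs ! i) (ss ! i)" using i by (simp add: tensor_smult_left)
  finally show ?thesis .
qed

lemma quasi_basis_left_R1_term: "u \<in> carrier R \<Longrightarrow> v \<in> carrier R \<Longrightarrow> i < length rs \<Longrightarrow>
  incl (ER (tensor u v \<otimes>\<^bsub>R1\<^esub> rs1 ! i)) \<otimes>\<^bsub>R1\<^esub> ss1 ! i = tensor u (E (v \<otimes> rs ! i) \<otimes> ss ! i)"
proof -
  assume u: "u \<in> carrier R" and v: "v \<in> carrier R" and i: "i < length rs"
  have "tensor u v \<otimes>\<^bsub>R1\<^esub> rs1 ! i = tensor (u \<otimes> E (v \<otimes> (inverse lam \<odot> rs ! i))) \<one>"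
    using u v i by (simp add: rs1_nth tensor_mult)
  also have "u \<otimes> E (v \<otimes> (inverse lam \<odot> rs ! i)) = inverse lam \<odot> (u \<otimes> E (v \<otimes> rs ! i))"
    using u v i by (simp add: mult_smult_right E_smult)
  finally have ER_eq: "ER (tensor u v \<otimes>\<^bsub>R1\<^esub> rs1 ! i) = u \<otimes> E (v \<otimes> rs ! i)"
    using u v i by (simp add: ER_tensor lam_smult_inverse_cancel)
  show ?thesis using u v i
    by (simp add: ER_eq ss1_nth incl_mult_tensor tensor_balanced)
qed

lemma quasi_basis_right_R1_term: "u \<in> carrier R \<Longrightarrow> v \<in> carrier R \<Longrightarrow> i < length rs \<Longrightarrow>
  rs1 ! i \<otimes>\<^bsub>R1\<^esub> incl (ER (ss1 ! i \<otimes>\<^bsub>R1\<^esub> tensor u v)) = tensor (rs ! i \<otimes> E (ss ! i \<otimes> u)) v"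
proof -
  assume u: "u \<in> carrier R" and v: "v \<in> carrier R" and i: "i < length rs"
  have ER_eq: "ER (ss1 ! i \<otimes>\<^bsub>R1\<^esub> tensor u v) = lam \<odot> (E (ss ! i \<otimes> u) \<otimes> v)"
    using u v i by (simp add: ss1_nth tensor_mult ER_tensor)
  have "rs1 ! i \<otimes>\<^bsub>R1\<^esub> incl (ER (ss1 ! i \<otimes>\<^bsub>R1\<^esub> tensor u v)) = tensor (inverse lam \<odot> rs ! i) (lam \<odot> (E (ss ! i \<otimes> u) \<otimes> v))"
    using u v i by (simp add: ER_eq rs1_nth tensor_mult_incl)
  also have "\<dots> = tensor (rs ! i) (E (ss ! i \<otimes> u) \<otimes> v)"
    using u v i by (simp add: tensor_smult_left tensor_smult_right lam_nonzero R1.smult_assoc1[symmetric])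
  also have "\<dots> = tensor (rs ! i \<otimes> E (ss ! i \<otimes> u)) v"
    using u v i by (simp add: tensor_balanced)
  finally show ?thesis .
qed

lemma quasi_basis_left_R1: "m \<in> carrier R1 \<Longrightarrow>
  (\<Oplus>\<^bsub>R1\<^esub>i\<in>{..<length rs}. incl (ER (m \<otimes>\<^bsub>R1\<^esub> rs1 ! i)) \<otimes>\<^bsub>R1\<^esub> ss1 ! i) = m"
proof (induction m rule: R1_induct)
  case zero
  have "(\<Oplus>\<^bsub>R1\<^esub>i\<in>{..<length rs}. incl (ER (\<zero>\<^bsub>R1\<^esub> \<otimes>\<^bsub>R1\<^esub> rs1 ! i)) \<otimes>\<^bsub>R1\<^esub> ss1 ! i)
      = (\<Oplus>\<^bsub>R1\<^esub>i\<in>{..<length rs}. \<zero>\<^bsub>R1\<^esub>)"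
    by (intro R1.finsum_cong'[OF refl]) (auto simp: rs1_nth ss1_nth ER_zero incl_zero)
  then show ?case by simp
next
  case (add x y)
  have "(\<Oplus>\<^bsub>R1\<^esub>i\<in>{..<length rs}. incl (ER ((x \<oplus>\<^bsub>R1\<^esub> y) \<otimes>\<^bsub>R1\<^esub> rs1 ! i)) \<otimes>\<^bsub>R1\<^esub> ss1 ! i)
    = (\<Oplus>\<^bsub>R1\<^esub>i\<in>{..<length rs}. incl (ER (x \<otimes>\<^bsub>R1\<^esub> rs1 ! i)) \<otimes>\<^bsub>R1\<^esub> ss1 ! i
        \<oplus>\<^bsub>R1\<^esub> incl (ER (y \<otimes>\<^bsub>R1\<^esub> rs1 ! i)) \<otimes>\<^bsub>R1\<^esub> ss1 ! i)"
    using add by (intro R1.finsum_cong'[OF refl])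
      (auto simp: rs1_nth ss1_nth R1.l_distr ER_add incl_add)
  also have "\<dots> = x \<oplus>\<^bsub>R1\<^esub> y"
    using add by (simp add: R1.finsum_addf Pi_def rs1_nth ss1_nth)
  finally show ?case .
next
  case (smult c x)
  have "(\<Oplus>\<^bsub>R1\<^esub>i\<in>{..<length rs}. incl (ER ((c \<odot>\<^bsub>R1\<^esub> x) \<otimes>\<^bsub>R1\<^esub> rs1 ! i)) \<otimes>\<^bsub>R1\<^esub> ss1 ! i)
    = (\<Oplus>\<^bsub>R1\<^esub>i\<in>{..<length rs}. c \<odot>\<^bsub>R1\<^esub> (incl (ER (x \<otimes>\<^bsub>R1\<^esub> rs1 ! i)) \<otimes>\<^bsub>R1\<^esub> ss1 ! i))"
    using smult by (intro R1.finsum_cong'[OF refl])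
      (auto simp: rs1_nth ss1_nth R1.mult_smult_left ER_smult incl_smult)
  also have "\<dots> = c \<odot>\<^bsub>R1\<^esub> x"
    using smult by (simp add: R1.smult_finsum[symmetric] Pi_def rs1_nth ss1_nth)
  finally show ?case .
next
  case (tensor u v)
  have "(\<Oplus>\<^bsub>R1\<^esub>i\<in>{..<length rs}. incl (ER (tensor u v \<otimes>\<^bsub>R1\<^esub> rs1 ! i)) \<otimes>\<^bsub>R1\<^esub> ss1 ! i)
     = (\<Oplus>\<^bsub>R1\<^esub>i\<in>{..<length rs}. tensor u (E (v \<otimes> rs ! i) \<otimes> ss ! i))"
    using tensor by (intro R1.finsum_cong'[OF refl]) (auto simp: quasi_basis_left_R1_term)
  also have "\<dots> = tensor u (\<Oplus>i\<in>{..<length rs}. E (v \<otimes> rs ! i) \<otimes> ss ! i)"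
    using tensor by (intro tensor_finsum_right[symmetric]) auto
  also have "\<dots> = tensor u v" using tensor quasi_basis_left by simp
  finally show ?case .
qed

lemma quasi_basis_right_R1: "m \<in> carrier R1 \<Longrightarrow>
  (\<Oplus>\<^bsub>R1\<^esub>i\<in>{..<length rs}. rs1 ! i \<otimes>\<^bsub>R1\<^esub> incl (ER (ss1 ! i \<otimes>\<^bsub>R1\<^esub> m))) = m"
proof (induction m rule: R1_induct)
  case zero
  have "(\<Oplus>\<^bsub>R1\<^esub>i\<in>{..<length rs}. rs1 ! i \<otimes>\<^bsub>R1\<^esub> incl (ER (ss1 ! i \<otimes>\<^bsub>R1\<^esub> \<zero>\<^bsub>R1\<^esub>)))
      = (\<Oplus>\<^bsub>R1\<^esub>i\<in>{..<length rs}. \<zero>\<^bsub>R1\<^esub>)"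
    by (intro R1.finsum_cong'[OF refl]) (auto simp: rs1_nth ss1_nth ER_zero incl_zero)
  then show ?case by simp
next
  case (add x y)
  have "(\<Oplus>\<^bsub>R1\<^esub>i\<in>{..<length rs}. rs1 ! i \<otimes>\<^bsub>R1\<^esub> incl (ER (ss1 ! i \<otimes>\<^bsub>R1\<^esub> (x \<oplus>\<^bsub>R1\<^esub> y))))
    = (\<Oplus>\<^bsub>R1\<^esub>i\<in>{..<length rs}. rs1 ! i \<otimes>\<^bsub>R1\<^esub> incl (ER (ss1 ! i \<otimes>\<^bsub>R1\<^esub> x))
        \<oplus>\<^bsub>R1\<^esub> rs1 ! i \<otimes>\<^bsub>R1\<^esub> incl (ER (ss1 ! i \<otimes>\<^bsub>R1\<^esub> y)))"
    using add by (intro R1.finsum_cong'[OF refl])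
      (auto simp: rs1_nth ss1_nth R1.r_distr ER_add incl_add)
  also have "\<dots> = x \<oplus>\<^bsub>R1\<^esub> y"
    using add by (simp add: R1.finsum_addf Pi_def rs1_nth ss1_nth)
  finally show ?case .
next
  case (smult c x)
  have "(\<Oplus>\<^bsub>R1\<^esub>i\<in>{..<length rs}. rs1 ! i \<otimes>\<^bsub>R1\<^esub> incl (ER (ss1 ! i \<otimes>\<^bsub>R1\<^esub> (c \<odot>\<^bsub>R1\<^esub> x))))
    = (\<Oplus>\<^bsub>R1\<^esub>i\<in>{..<length rs}. c \<odot>\<^bsub>R1\<^esub> (rs1 ! i \<otimes>\<^bsub>R1\<^esub> incl (ER (ss1 ! i \<otimes>\<^bsub>R1\<^esub> x))))"
    using smult by (intro R1.finsum_cong'[OF refl])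
      (auto simp: rs1_nth ss1_nth R1.mult_smult_right ER_smult incl_smult)
  also have "\<dots> = c \<odot>\<^bsub>R1\<^esub> x"
    using smult by (simp add: R1.smult_finsum[symmetric] Pi_def rs1_nth ss1_nth)
  finally show ?case .
next
  case (tensor u v)
  have "(\<Oplus>\<^bsub>R1\<^esub>i\<in>{..<length rs}. rs1 ! i \<otimes>\<^bsub>R1\<^esub> incl (ER (ss1 ! i \<otimes>\<^bsub>R1\<^esub> tensor u v)))
     = (\<Oplus>\<^bsub>R1\<^esub>i\<in>{..<length rs}. tensor (rs ! i \<otimes> E (ss ! i \<otimes> u)) v)"
    using tensor by (intro R1.finsum_cong'[OF refl]) (auto simp: quasi_basis_right_R1_term)
  also have "\<dots> = tensor (\<Oplus>i\<in>{..<length rs}. rs ! i \<otimes> E (ss ! i \<otimes> u)) v"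
    using tensor by (intro tensor_finsum_left[symmetric]) auto
  also have "\<dots> = tensor u v" using tensor quasi_basis_right by simp
  finally show ?case .
qed

lemma quasi_basis_trace_R1: "(\<Oplus>\<^bsub>R1\<^esub>i\<in>{..<length rs}. rs1 ! i \<otimes>\<^bsub>R1\<^esub> ss1 ! i) = inverse lam \<odot>\<^bsub>R1\<^esub> \<one>\<^bsub>R1\<^esub>"
proof -
  have "(\<Oplus>\<^bsub>R1\<^esub>i\<in>{..<length rs}. rs1 ! i \<otimes>\<^bsub>R1\<^esub> ss1 ! i)
      = (\<Oplus>\<^bsub>R1\<^esub>i\<in>{..<length rs}. inverse lam \<odot>\<^bsub>R1\<^esub> tensor (rs ! i) (ss ! i))"
    by (intro R1.finsum_cong'[OF refl]) (simp_all add: rs1_mult_ss1)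
  also have "\<dots> = inverse lam \<odot>\<^bsub>R1\<^esub> \<one>\<^bsub>R1\<^esub>"
    by (simp add: one_R1_tensor_sum R1.smult_finsum Pi_def)
  finally show ?thesis .
qed

lemma subalg_incl_image: "subalg R1 (incl ` carrier R)"
  unfolding subalg_def
proof (intro conjI ballI allI)
  show "incl ` carrier R \<subseteq> carrier R1" by auto
  show "\<one>\<^bsub>R1\<^esub> \<in> incl ` carrier R" using incl_one by (metis image_eqI one_closed)
next
  fix a b assume "a \<in> incl ` carrier R" "b \<in> incl ` carrier R"
  then show "a \<oplus>\<^bsub>R1\<^esub> b \<in> incl ` carrier R" and "a \<otimes>\<^bsub>R1\<^esub> b \<in> incl ` carrier R"
    by (auto simp: incl_add[symmetric] incl_mult)
next
  fix c a assume "a \<in> incl ` carrier R"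
  then show "c \<odot>\<^bsub>R1\<^esub> a \<in> incl ` carrier R" by (auto simp: incl_smult[symmetric])
qed

lemma basic_construction_strongly_separable:
  "strongly_separable R1 (incl ` carrier R) (incl \<circ> ER) rs1 ss1 lam"
proof unfold_locales
  show "subalg R1 (incl ` carrier R)" by (rule subalg_incl_image)
  show "length rs1 = length ss1" by (simp add: rs1_length ss1_length)
  show "set rs1 \<subseteq> carrier R1" "set ss1 \<subseteq> carrier R1"
    using rs_closed ss_closed by (auto simp: bc_left_def bc_right_def)
  show "lam \<noteq> 0" by (rule lam_nonzero)
  show "(incl \<circ> ER) \<one>\<^bsub>R1\<^esub> = \<one>\<^bsub>R1\<^esub>" by (simp add: ER_one incl_one)
  show "(\<Oplus>\<^bsub>R1\<^esub>i\<in>{..<length rs1}. rs1 ! i \<otimes>\<^bsub>R1\<^esub> ss1 ! i) = inverse lam \<odot>\<^bsub>R1\<^esub> \<one>\<^bsub>R1\<^esub>"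
    using quasi_basis_trace_R1 by (simp add: rs1_length)
qed (auto simp: ER_add incl_add ER_incl_mult ER_mult_incl incl_mult rs1_length
    quasi_basis_left_R1 quasi_basis_right_R1)

section \<open>Irreducibility and invariants\<close>

lemma tensor_one_inj: "m \<in> carrier R \<Longrightarrow> m' \<in> carrier R \<Longrightarrow> tensor \<one> m = tensor \<one> m' \<Longrightarrow> m = m'"
proof -
  assume m: "m \<in> carrier R" and m': "m' \<in> carrier R" and eq: "tensor \<one> m = tensor \<one> m'"
  have "lam \<odot> m = lam \<odot> m'" using arg_cong[OF eq, of ER] m m' by (simp add: ER_tensor)
  then have "inverse lam \<odot> (lam \<odot> m) = inverse lam \<odot> (lam \<odot> m')" by simp
  then show ?thesis using m m' by (simp add: inverse_lam_smult_cancel)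
qed

lemma e_mult_eq_tensor_one: "y \<in> carrier R1 \<Longrightarrow> \<exists>m\<in>carrier R. e \<otimes>\<^bsub>R1\<^esub> y = tensor \<one> m"
proof (induction y rule: R1_induct)
  case zero
  then show ?case by (intro bexI[of _ \<zero>]) (simp_all add: tensor_zero_right)
next
  case (add x y)
  then obtain m1 m2 where "m1 \<in> carrier R" "e \<otimes>\<^bsub>R1\<^esub> x = tensor \<one> m1" "m2 \<in> carrier R" "e \<otimes>\<^bsub>R1\<^esub> y = tensor \<one> m2"
    by blast
  with add show ?case by (intro bexI[of _ "m1 \<oplus> m2"]) (simp_all add: R1.r_distr tensor_add_right)
next
  case (smult c x)
  then obtain m1 where "m1 \<in> carrier R" "e \<otimes>\<^bsub>R1\<^esub> x = tensor \<one> m1" by blast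
  with smult show ?case by (intro bexI[of _ "c \<odot> m1"]) (simp_all add: R1.mult_smult_right tensor_smult_right)
next
  case (tensor u v)
  have "e \<otimes>\<^bsub>R1\<^esub> tensor u v = tensor (\<one> \<otimes> E u) v" using tensor by (simp add: e_tensor tensor_mult)
  also have "\<dots> = tensor \<one> (E u \<otimes> v)" using tensor by (intro tensor_balanced) auto
  finally show ?case using tensor by (intro bexI[of _ "E u \<otimes> v"]) auto
qed

lemma e_mult_commutant:
  assumes y: "y \<in> carrier R1" and m: "m \<in> carrier R" and ey: "e \<otimes>\<^bsub>R1\<^esub> y = tensor \<one> m"
    and comm: "\<And>s. s \<in> S \<Longrightarrow> incl s \<otimes>\<^bsub>R1\<^esub> y = y \<otimes>\<^bsub>R1\<^esub> incl s"
  shows "m \<in> cent R S"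
  unfolding cent_def
proof (intro CollectI conjI ballI m)
  fix s assume s: "s \<in> S"
  then have s': "s \<in> carrier R" by simp
  have "tensor \<one> (m \<otimes> s) = e \<otimes>\<^bsub>R1\<^esub> y \<otimes>\<^bsub>R1\<^esub> incl s" using m s' by (simp add: ey tensor_mult_incl)
  also have "\<dots> = e \<otimes>\<^bsub>R1\<^esub> (incl s \<otimes>\<^bsub>R1\<^esub> y)" using y s s' by (simp add: comm R1.m_assoc)
  also have "\<dots> = incl s \<otimes>\<^bsub>R1\<^esub> tensor \<one> m"
    using y s s' by (simp add: R1.m_assoc[symmetric] e_incl_comm) (simp add: R1.m_assoc ey)
  also have "\<dots> = tensor \<one> (s \<otimes> m)"
    using tensor_balanced[of \<one> m s] s s' m by (simp add: incl_mult_tensor)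
  finally show "m \<otimes> s = s \<otimes> m" using m s' by (intro tensor_one_inj) auto
qed

(* e_1 y = 1 \<otimes> m with m in C_R(S), and y is recovered from (u \<otimes> v) y = u \<otimes> m v. *)
lemma commutant_incl_scalar:
  assumes irr: "cent R S = {c \<odot> \<one> | c. True}" and y: "y \<in> carrier R1"
    and comm: "\<And>a. a \<in> carrier R \<Longrightarrow> incl a \<otimes>\<^bsub>R1\<^esub> y = y \<otimes>\<^bsub>R1\<^esub> incl a"
  shows "\<exists>c. y = c \<odot>\<^bsub>R1\<^esub> \<one>\<^bsub>R1\<^esub>"
proof -
  obtain m where m: "m \<in> carrier R" "e \<otimes>\<^bsub>R1\<^esub> y = tensor \<one> m"
    using e_mult_eq_tensor_one[OF y] by blast
  then have "m \<in> cent R S" using e_mult_commutant[OF y] comm by simp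
  then obtain c where c: "m = c \<odot> \<one>" using irr by auto
  have tensor_mult_y: "tensor u v \<otimes>\<^bsub>R1\<^esub> y = c \<odot>\<^bsub>R1\<^esub> tensor u v"
    if u: "u \<in> carrier R" and v: "v \<in> carrier R" for u v
  proof -
    have "tensor u v \<otimes>\<^bsub>R1\<^esub> y = incl u \<otimes>\<^bsub>R1\<^esub> ((e \<otimes>\<^bsub>R1\<^esub> y) \<otimes>\<^bsub>R1\<^esub> incl v)"
      using u v y comm by (simp add: tensor_eq_incl_e_incl R1.m_assoc)
    also have "\<dots> = tensor u (m \<otimes> v)" using u v m by (simp add: tensor_mult_incl incl_mult_tensor)
    also have "\<dots> = c \<odot>\<^bsub>R1\<^esub> tensor u v" using u v by (simp add: c mult_smult_left tensor_smult_right)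
    finally show ?thesis .
  qed
  have "y = (\<Oplus>\<^bsub>R1\<^esub>i\<in>{..<length rs}. tensor (rs ! i) (ss ! i) \<otimes>\<^bsub>R1\<^esub> y)"
    using y R1.l_one[OF y] by (simp add: one_R1_tensor_sum R1.finsum_ldistr Pi_def)
  also have "\<dots> = (\<Oplus>\<^bsub>R1\<^esub>i\<in>{..<length rs}. c \<odot>\<^bsub>R1\<^esub> tensor (rs ! i) (ss ! i))"
    by (intro R1.finsum_cong'[OF refl]) (simp_all add: tensor_mult_y)
  also have "\<dots> = c \<odot>\<^bsub>R1\<^esub> \<one>\<^bsub>R1\<^esub>" by (simp add: one_R1_tensor_sum R1.smult_finsum Pi_def)
  finally show ?thesis by blast
qed

lemma E_ER_e_incl_mult: assumes u: "u \<in> carrier R" and b: "b \<in> carrier R1"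
  shows "E (ER (e \<otimes>\<^bsub>R1\<^esub> incl u \<otimes>\<^bsub>R1\<^esub> b)) = E (u \<otimes> ER (b \<otimes>\<^bsub>R1\<^esub> e))"
  using b
proof (induction b rule: R1_induct)
  case zero then show ?case using u by (simp add: ER_zero)
next
  case (add x y)
  then show ?case using u by (simp add: R1.r_distr R1.l_distr ER_add r_distr E_add)
next
  case (smult c x)
  then show ?case using u by (simp add: R1.mult_smult_right R1.mult_smult_left ER_smult mult_smult_right E_smult)
next
  case (tensor q1 q2)
  have "e \<otimes>\<^bsub>R1\<^esub> incl u \<otimes>\<^bsub>R1\<^esub> tensor q1 q2 = tensor (E (u \<otimes> q1)) q2"
    using tensor u by (simp add: R1.m_assoc incl_mult_tensor e_tensor tensor_mult)
  then have lhs: "E (ER (e \<otimes>\<^bsub>R1\<^esub> incl u \<otimes>\<^bsub>R1\<^esub> tensor q1 q2)) = lam \<odot> (E (u \<otimes> q1) \<otimes> E q2)"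
    using tensor u by (simp add: ER_tensor E_smult E_mult_left)
  have "tensor q1 q2 \<otimes>\<^bsub>R1\<^esub> e = tensor (q1 \<otimes> E q2) \<one>" using tensor by (simp add: e_tensor tensor_mult)
  then have "E (u \<otimes> ER (tensor q1 q2 \<otimes>\<^bsub>R1\<^esub> e)) = lam \<odot> E (u \<otimes> q1 \<otimes> E q2)"
    using tensor u by (simp add: ER_tensor mult_smult_right E_smult m_assoc)
  also have "\<dots> = lam \<odot> (E (u \<otimes> q1) \<otimes> E q2)" using tensor u by (simp add: E_mult_right)
  finally show ?case using lhs by simp
qed

lemma ER_e: "ER e = lam \<odot> \<one>"
  by (simp add: e_tensor ER_tensor)

lemma ER_e_incl_e: "a \<in> carrier R \<Longrightarrow> ER (e \<otimes>\<^bsub>R1\<^esub> incl a \<otimes>\<^bsub>R1\<^esub> e) = lam \<odot> E a"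
  by (simp add: e_incl_e ER_incl_mult_e)

lemma ER_mult_e_comm:
  assumes b: "b \<in> carrier R1" and s: "s \<in> S" and comm: "b \<otimes>\<^bsub>R1\<^esub> incl s = incl s \<otimes>\<^bsub>R1\<^esub> b"
  shows "s \<otimes> ER (b \<otimes>\<^bsub>R1\<^esub> e) = ER (b \<otimes>\<^bsub>R1\<^esub> e) \<otimes> s"
proof -
  have s': "s \<in> carrier R" using s by simp
  have "s \<otimes> ER (b \<otimes>\<^bsub>R1\<^esub> e) = ER (incl s \<otimes>\<^bsub>R1\<^esub> b \<otimes>\<^bsub>R1\<^esub> e)"
    using b s' by (simp add: ER_incl_mult R1.m_assoc)
  also have "\<dots> = ER (b \<otimes>\<^bsub>R1\<^esub> (incl s \<otimes>\<^bsub>R1\<^esub> e))"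
    using b s' by (simp add: comm[symmetric] R1.m_assoc)
  also have "\<dots> = ER (b \<otimes>\<^bsub>R1\<^esub> e) \<otimes> s"
    using b s s' by (simp add: e_incl_comm[symmetric] R1.m_assoc[symmetric] ER_mult_incl)
  finally show ?thesis .
qed

lemma R1_trivial: "\<one> = \<zero> \<Longrightarrow> X \<in> carrier R1 \<Longrightarrow> X = \<zero>\<^bsub>R1\<^esub>"
  using incl_one incl_zero R1.l_one[of X] R1.l_null[of X] by simp

end

locale irreducible_extension = strongly_separable +
  assumes irreducible: "cent R S = {c \<odot> \<one> | c. True}"

(* The next step M \<subseteq> M_1 \<subseteq> M_2 of the tower: the basic construction of M_1 over M with E_M. *)
sublocale irreducible_extension \<subseteq> up: strongly_separable R1 "incl ` carrier R" "incl \<circ> ER" rs1 ss1 lam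
  by (rule basic_construction_strongly_separable)

context irreducible_extension begin

lemma twB_eq: "twB R S E rs ss lam = cent up.R1 ((up.incl \<circ> incl) ` carrier R)"
  by (simp add: twB_def twM2_def twi2_def twM1_def twi1_def twEM_def)

lemma act_eq:
  "act R S E rs ss lam b x = inverse lam \<odot>\<^bsub>R1\<^esub> up.ER (b \<otimes>\<^bsub>up.R1\<^esub> up.incl x \<otimes>\<^bsub>up.R1\<^esub> up.e)"
  by (simp add: act_def twM2_def twi2_def twe2_def twEM1_def twM1_def twi1_def twEM_def)

lemma counit_eq: "counit R S E rs ss lam b =
    inverse lam ^ 2 * (THE c. ER (up.ER (up.e \<otimes>\<^bsub>up.R1\<^esub> up.incl e \<otimes>\<^bsub>up.R1\<^esub> b)) = c \<odot> \<one>)"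
  by (simp add: counit_def twF_def twM2_def twi2_def twe2_def twEM1_def twM1_def twi1_def twe1_def twEM_def)

lemma act_closed:
  "b \<in> twB R S E rs ss lam \<Longrightarrow> x \<in> carrier R1 \<Longrightarrow> act R S E rs ss lam b x \<in> carrier R1"
  by (auto simp: act_eq twB_eq cent_def)

lemma e_in_twB: "up.e \<in> twB R S E rs ss lam"
  using up.e_incl_comm by (auto simp: twB_eq cent_def)

lemma act_e: "x \<in> carrier R1 \<Longrightarrow> act R S E rs ss lam up.e x = incl (ER x)"
  by (simp add: act_eq up.ER_e_incl_e up.inverse_lam_smult_cancel)

lemma counit_e: "\<one> \<noteq> \<zero> \<Longrightarrow> counit R S E rs ss lam up.e = 1"
proof -
  assume nontrivial: "\<one> \<noteq> \<zero>"
  have "ER (up.ER (up.e \<otimes>\<^bsub>up.R1\<^esub> up.incl e \<otimes>\<^bsub>up.R1\<^esub> up.e)) = (lam * lam) \<odot> \<one>"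
    by (simp add: up.ER_e_incl_e ER_smult ER_incl ER_e smult_assoc1)
  then show ?thesis
    using nontrivial lam_nonzero by (simp add: counit_eq the_smult_one_eq power2_eq_square field_simps)
qed

lemma twB_commutes:
  assumes "b \<in> twB R S E rs ss lam"
  shows "b \<in> carrier up.R1"
    and "a \<in> carrier R \<Longrightarrow> b \<otimes>\<^bsub>up.R1\<^esub> up.incl (incl a) = up.incl (incl a) \<otimes>\<^bsub>up.R1\<^esub> b"
  using assms by (auto simp: twB_eq cent_def)

lemma ER_mult_e_scalar:
  assumes b: "b \<in> twB R S E rs ss lam"
  shows "\<exists>c. up.ER (b \<otimes>\<^bsub>up.R1\<^esub> up.e) = c \<odot>\<^bsub>R1\<^esub> \<one>\<^bsub>R1\<^esub>"
proof (rule commutant_incl_scalar[OF irreducible])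
  show "up.ER (b \<otimes>\<^bsub>up.R1\<^esub> up.e) \<in> carrier R1" using twB_commutes(1)[OF b] by simp
  fix a assume "a \<in> carrier R"
  then show "incl a \<otimes>\<^bsub>R1\<^esub> up.ER (b \<otimes>\<^bsub>up.R1\<^esub> up.e) = up.ER (b \<otimes>\<^bsub>up.R1\<^esub> up.e) \<otimes>\<^bsub>R1\<^esub> incl a"
    using up.ER_mult_e_comm[OF twB_commutes(1)[OF b] _ twB_commutes(2)[OF b]] by simp
qed

lemma act_incl_scalar:
  assumes b: "b \<in> twB R S E rs ss lam" and m: "m \<in> carrier R"
    and c: "up.ER (b \<otimes>\<^bsub>up.R1\<^esub> up.e) = c \<odot>\<^bsub>R1\<^esub> \<one>\<^bsub>R1\<^esub>"
  shows "act R S E rs ss lam b (incl m) = (inverse lam * c) \<odot>\<^bsub>R1\<^esub> incl m"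
proof -
  note b' = twB_commutes[OF b]
  have "b \<otimes>\<^bsub>up.R1\<^esub> up.incl (incl m) \<otimes>\<^bsub>up.R1\<^esub> up.e = up.incl (incl m) \<otimes>\<^bsub>up.R1\<^esub> (b \<otimes>\<^bsub>up.R1\<^esub> up.e)"
    using b' m by (simp add: up.R1.m_assoc)
  then have "act R S E rs ss lam b (incl m) = inverse lam \<odot>\<^bsub>R1\<^esub> (incl m \<otimes>\<^bsub>R1\<^esub> (c \<odot>\<^bsub>R1\<^esub> \<one>\<^bsub>R1\<^esub>))"
    using b' m by (simp add: act_eq up.ER_incl_mult c[symmetric])
  also have "\<dots> = (inverse lam * c) \<odot>\<^bsub>R1\<^esub> incl m"
    using m by (simp add: R1.mult_smult_right R1.smult_assoc1)
  finally show ?thesis .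
qed

lemma counit_scalar:
  assumes b: "b \<in> twB R S E rs ss lam" and nontrivial: "\<one> \<noteq> \<zero>"
    and c: "up.ER (b \<otimes>\<^bsub>up.R1\<^esub> up.e) = c \<odot>\<^bsub>R1\<^esub> \<one>\<^bsub>R1\<^esub>"
  shows "counit R S E rs ss lam b = inverse lam * c"
proof -
  note b' = twB_commutes(1)[OF b]
  have "incl (ER (up.ER (up.e \<otimes>\<^bsub>up.R1\<^esub> up.incl e \<otimes>\<^bsub>up.R1\<^esub> b)))
      = incl (ER (e \<otimes>\<^bsub>R1\<^esub> (c \<odot>\<^bsub>R1\<^esub> \<one>\<^bsub>R1\<^esub>)))"
    using up.E_ER_e_incl_mult[OF e_closed b'] by (simp add: c)
  then have "ER (up.ER (up.e \<otimes>\<^bsub>up.R1\<^esub> up.incl e \<otimes>\<^bsub>up.R1\<^esub> b)) = ER (e \<otimes>\<^bsub>R1\<^esub> (c \<odot>\<^bsub>R1\<^esub> \<one>\<^bsub>R1\<^esub>))"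
    by (rule incl_inj[rotated 2]) (use b' in auto)
  also have "\<dots> = (c * lam) \<odot> \<one>"
    by (simp add: R1.mult_smult_right ER_smult ER_e smult_assoc1)
  finally show ?thesis
    using nontrivial lam_nonzero by (simp add: counit_eq the_smult_one_eq power2_eq_square field_simps)
qed

lemma act_incl:
  assumes b: "b \<in> twB R S E rs ss lam" and m: "m \<in> carrier R" and nontrivial: "\<one> \<noteq> \<zero>"
  shows "act R S E rs ss lam b (incl m) = counit R S E rs ss lam b \<odot>\<^bsub>R1\<^esub> incl m"
proof -
  obtain c where "up.ER (b \<otimes>\<^bsub>up.R1\<^esub> up.e) = c \<odot>\<^bsub>R1\<^esub> \<one>\<^bsub>R1\<^esub>"
    using ER_mult_e_scalar[OF b] by blast
  then show ?thesis using act_incl_scalar[OF b m] counit_scalar[OF b nontrivial] by simp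
qed

lemma invariants_eq_incl_image:
  "{x \<in> carrier R1. \<forall>b\<in>twB R S E rs ss lam.
      act R S E rs ss lam b x = counit R S E rs ss lam b \<odot>\<^bsub>R1\<^esub> x} = incl ` carrier R"
  (is "?Inv = _")
proof (cases "\<one> = \<zero>")
  case True
  \<comment> \<open>the counit (a THE) is unspecified, but R1 is the zero algebra\<close>
  have "act R S E rs ss lam b x = counit R S E rs ss lam b \<odot>\<^bsub>R1\<^esub> x"
    if "b \<in> twB R S E rs ss lam" "x \<in> carrier R1" for b x
    using R1_trivial[OF True, of "act R S E rs ss lam b x"] act_closed[OF that]
      R1_trivial[OF True, of "counit R S E rs ss lam b \<odot>\<^bsub>R1\<^esub> x"] that(2) by simp
  then have "?Inv = carrier R1" by blast
  moreover have "carrier R1 \<subseteq> incl ` carrier R"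
  proof
    fix x assume "x \<in> carrier R1"
    then have "x = incl \<zero>" using R1_trivial[OF True, of x] incl_zero by simp
    then show "x \<in> incl ` carrier R" by blast
  qed
  ultimately show ?thesis by auto
next
  case False
  show ?thesis
  proof (intro equalityI subsetI)
    fix x assume "x \<in> ?Inv"
    then have "x \<in> carrier R1" "x = incl (ER x)"
      using e_in_twB act_e counit_e[OF False] by auto
    then show "x \<in> incl ` carrier R" by (metis image_eqI ER_closed)
  next
    fix x assume "x \<in> incl ` carrier R"
    then show "x \<in> ?Inv" using act_incl[OF _ _ False] by auto
  qed
qed

end

theorem proposition5p2:
  fixes M :: "('k::field, 'a) module" and N :: "'a set" and E :: "'a \<Rightarrow> 'a"
    and xs ys :: "'a list" and lam :: 'k
  assumes kalg: "kalg M"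
    and sub: "subalg M N"
    and irred: "cent M N = {c \<odot>\<^bsub>M\<^esub> \<one>\<^bsub>M\<^esub> | c. True}"
    and E_into: "\<forall>m\<in>carrier M. E m \<in> N"
    and E_add: "\<forall>a\<in>carrier M. \<forall>b\<in>carrier M. E (a \<oplus>\<^bsub>M\<^esub> b) = E a \<oplus>\<^bsub>M\<^esub> E b"
    and E_left: "\<forall>n\<in>N. \<forall>m\<in>carrier M. E (n \<otimes>\<^bsub>M\<^esub> m) = n \<otimes>\<^bsub>M\<^esub> E m"
    and E_right: "\<forall>n\<in>N. \<forall>m\<in>carrier M. E (m \<otimes>\<^bsub>M\<^esub> n) = E m \<otimes>\<^bsub>M\<^esub> n"
    and len: "length xs = length ys"
    and xs_in: "set xs \<subseteq> carrier M" and ys_in: "set ys \<subseteq> carrier M"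
    and qb1: "\<forall>m\<in>carrier M.
       (\<Oplus>\<^bsub>M\<^esub>i\<in>{..<length xs}. E (m \<otimes>\<^bsub>M\<^esub> xs ! i) \<otimes>\<^bsub>M\<^esub> ys ! i) = m"
    and qb2: "\<forall>m\<in>carrier M.
       (\<Oplus>\<^bsub>M\<^esub>i\<in>{..<length xs}. xs ! i \<otimes>\<^bsub>M\<^esub> E (ys ! i \<otimes>\<^bsub>M\<^esub> m)) = m"
    and E1: "E \<one>\<^bsub>M\<^esub> = \<one>\<^bsub>M\<^esub>"
    and lam_nz: "lam \<noteq> 0"
    and xy: "(\<Oplus>\<^bsub>M\<^esub>i\<in>{..<length xs}. xs ! i \<otimes>\<^bsub>M\<^esub> ys ! i) = inverse lam \<odot>\<^bsub>M\<^esub> \<one>\<^bsub>M\<^esub>"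
  assumes depth2_1: "free_right_basis_in (twM1 M N E xs ys) (twi1 M N xs ys ` carrier M) (twA M N E xs ys)"
    and depth2_2: "free_right_basis_in (twM2 M N E xs ys lam)
         (twi2 M N E xs ys lam ` carrier (twM1 M N E xs ys)) (twB M N E xs ys lam)"
  shows "{x \<in> carrier (twM1 M N E xs ys). \<forall>b\<in>twB M N E xs ys lam.
            act M N E xs ys lam b x = counit M N E xs ys lam b \<odot>\<^bsub>twM1 M N E xs ys\<^esub> x}
         = twi1 M N xs ys ` carrier M"
proof -
  interpret irreducible_extension M N E xs ys lam
    by unfold_locales
      (use kalg sub irred E_into E_add E_left E_right len xs_in ys_in qb1 qb2 E1 lam_nz xy in auto)
  show ?thesis using invariants_eq_incl_image by (simp add: twM1_def twi1_def)
qed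

end
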